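(* Let $n$ be odd and squarefree with $\Omega(n)=3$ and every prime divisor of $n$ at least $7$. Let $p'$ be a prime divisor of $n$ and $A=L(n;p')$. Let $S=(x_1,x_2,x_3)$ be an $A$-extremal sequence for the Davenport constant in $\mathbb{Z}_n$. Then at least one of the following holds: (i) $S$ is equivalent with respect to $A$ to a sequence $(y_1,y_2,y_3)$ with $y_3\neq 0$, $y_3$ divisible by $n'=n/p'$, and such that the image of $(y_1,y_2)$ under the natural map $\mathbb{Z}_n\to\mathbb{Z}_{n'}$ is an $S(n')$-extremal sequence for the Davenport constant; (ii) $S$ is equivalent with respect to $A$ to a sequence $(y_1,y_2,y_3)$ for which there is a prime divisor $p$ of $n$ such that $y_1$ is the only term not divisible by $p$, and, with $n'=n/p$, $T=(y_2,y_3)$ and $T'$ the image of $T$ under the natural map $\mathbb{Z}_n\to\mathbb{Z}_{n'}$, the sequence $T'$ is an $S(n')$-extremal sequence for the Davenport constant; moreover, if $p\neq p'$, then $T'$ is a $U(n')$-extremal sequence for the Davenport constant.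
   Context: $\mathbb{Z}_m$ is the integers mod $m$, $U(m)$ its unit group. For nonempty $A\subseteq\mathbb{Z}_m\setminus\{0\}$, a sequence $(x_1,\ldots,x_k)$ is an $A$-weighted zero-sum sequence if $\sum a_ix_i=0$ for some $a_i\in A$; $D_A(m)$ is the least $k$ such that every length-$k$ sequence in $\mathbb{Z}_m$ has a nonempty $A$-weighted zero-sum subsequence; an $A$-extremal sequence for the Davenport constant is a sequence of length $D_A(m)-1$ with no $A$-weighted zero-sum subsequence. For a multiplicative group $A$, $(x_1,\ldots,x_k)$ and $(y_1,\ldots,y_k)$ are equivalent with respect to $A$ if there are $a_i\in A$, a unit $c$ and a permutation $\sigma$ with $y_{\sigma(i)}=c\,a_ix_i$ for all $i$. $\Omega(n)$ is the number of prime factors with multiplicity. For odd $m=\prod p_i^{r_i}$, prime $p\mid m$ and $a\in U(m)$, $\left(\frac{a}{p}\right)$ is the Legendre symbol of the image mod $p$, $\left(\frac{a}{m}\right)=\prod\left(\frac{a}{p_i}\right)^{r_i}$, $S(m)$ is the kernel of $a\mapsto\left(\frac{a}{m}\right)$ on $U(m)$, and $L(m;p')=\{a\in U(m):\left(\frac{a}{m}\right)=\left(\frac{a}{p'}\right)\}$ for a prime $p'\mid m$ (a subgroup of $U(m)$). *)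

theory Defs
  imports "HOL-Number_Theory.Number_Theory" "HOL-Computational_Algebra.Squarefree"
    "HOL-Combinatorics.Permutations"
begin

text \<open>Elements of Z_m are represented by integers in {0..<m}; sequences by int lists.\<close>

definition Zmod :: "nat \<Rightarrow> int set" where
  "Zmod m = {0..<int m}"

definition units_mod :: "nat \<Rightarrow> int set" where
  "units_mod m = {a \<in> Zmod m. coprime a (int m)}"

definition weighted_zero_sum :: "nat \<Rightarrow> int set \<Rightarrow> int list \<Rightarrow> bool" where
  "weighted_zero_sum m A xs \<longleftrightarrow>
     (\<exists>a. (\<forall>i<length xs. a i \<in> A) \<and> [(\<Sum>i<length xs. a i * xs ! i) = 0] (mod int m))"

definition has_wzs_subseq :: "nat \<Rightarrow> int set \<Rightarrow> int list \<Rightarrow> bool" where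
  "has_wzs_subseq m A xs \<longleftrightarrow>
     (\<exists>I. I \<subseteq> {..<length xs} \<and> I \<noteq> {} \<and>
        weighted_zero_sum m A (nths xs I))"

definition davenport :: "nat \<Rightarrow> int set \<Rightarrow> nat" where
  "davenport m A = (LEAST k. \<forall>xs. length xs = k \<and> set xs \<subseteq> Zmod m \<longrightarrow> has_wzs_subseq m A xs)"

definition extremal :: "nat \<Rightarrow> int set \<Rightarrow> int list \<Rightarrow> bool" where
  "extremal m A xs \<longleftrightarrow> set xs \<subseteq> Zmod m \<and> length xs = davenport m A - 1 \<and>
     \<not> has_wzs_subseq m A xs"

definition equiv_wrt :: "nat \<Rightarrow> int set \<Rightarrow> int list \<Rightarrow> int list \<Rightarrow> bool" where
  "equiv_wrt m A xs ys \<longleftrightarrow> length xs = length ys \<and> set ys \<subseteq> Zmod m \<and>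
     (\<exists>a c \<sigma>. (\<forall>i<length xs. a i \<in> A) \<and> c \<in> units_mod m \<and> \<sigma> permutes {..<length xs} \<and>
        (\<forall>i<length xs. [ys ! (\<sigma> i) = c * a i * xs ! i] (mod int m)))"

definition jsym :: "int \<Rightarrow> nat \<Rightarrow> int" where
  "jsym a m = (\<Prod>p\<in>prime_factors m. Legendre a (int p) ^ multiplicity p m)"

definition Sgrp :: "nat \<Rightarrow> int set" where
  "Sgrp m = {a \<in> units_mod m. jsym a m = 1}"

definition Lgrp :: "nat \<Rightarrow> nat \<Rightarrow> int set" where
  "Lgrp m p' = {a \<in> units_mod m. jsym a m = Legendre a (int p')}"

end

(* Write n = P q r with P = p'. By the Chinese remainder theorem, a weighted zero sum over
   a set J of indices with weights in L(n; P) amounts to three local zero sums: one modulo P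
   with arbitrary unit weights, and one modulo each of q and r, whose weights have the same
   quadratic characters at q and at r. For a prime p >= 7, the solvability of such a local
   problem depends only on the set N of terms that p does not divide: it is impossible if
   |N| = 1, constrains a single product of two signs if |N| = 2, and is unconstrained if
   |N| = 0 or |N| = 3, since every sign pattern occurs in a zero sum t0 + t1 + t2 of units.
   Playing these constraints against each other shows that a zero-sum-free triple has a term
   divisible by q r, or a prime p that divides all terms but one; and that the other two
   terms stay zero-sum free modulo n/p for S(n/p), and also for U(n/p) when p <> P. As
   D_G(qr) = 3 whenever S(qr) <= G <= U(qr), such a pair is extremal. *)

theory Submission
  imports Defs
begin

section \<open>Quadratic characters modulo a prime\<close>

lemma Legendre_cong:
  assumes "[a = b] (mod m)"
  shows "Legendre a m = Legendre b m"
proof -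
  have "[a = 0] (mod m) \<longleftrightarrow> [b = 0] (mod m)"
    using assms cong_sym cong_trans by blast
  moreover have "[y ^ 2 = a] (mod m) \<longleftrightarrow> [y ^ 2 = b] (mod m)" for y
    using assms cong_sym cong_trans by blast
  ultimately show ?thesis
    unfolding Legendre_def QuadRes_def by simp
qed

lemma Legendre_not_dvd:
  assumes "\<not> m dvd a"
  shows "Legendre a m \<in> {1, -1}"
  using assms by (auto simp: Legendre_def cong_0_iff)

lemma Legendre_one:
  assumes "prime p"
  shows "Legendre 1 (int p) = 1"
  using assms unfolding Legendre_def QuadRes_def
  by (auto simp: cong_0_iff intro!: exI[of _ 1])

lemma Legendre_square:
  assumes "prime p" "\<not> int p dvd x"
  shows "Legendre (x ^ 2) (int p) = 1"
proof -
  have "prime (int p)"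
    using assms(1) by simp
  then have "\<not> int p dvd x ^ 2"
    using assms(2) prime_dvd_power by blast
  moreover have "QuadRes (int p) (x ^ 2)"
    unfolding QuadRes_def using cong_refl by blast
  ultimately show ?thesis
    unfolding Legendre_def by (simp add: cong_0_iff)
qed

lemma Legendre_mult:
  assumes p: "prime p" "2 < p"
  shows "Legendre (a * b) (int p) = Legendre a (int p) * Legendre b (int p)"
proof (rule ccontr)
  assume ne: "Legendre (a * b) (int p) \<noteq> Legendre a (int p) * Legendre b (int p)"
  let ?k = "(p - 1) div 2"
  have "[Legendre (a * b) (int p) = a ^ ?k * b ^ ?k] (mod int p)"
    using euler_criterion[OF p, of "a * b"] by (simp add: power_mult_distrib)
  moreover have "[Legendre a (int p) * Legendre b (int p) = a ^ ?k * b ^ ?k] (mod int p)"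
    using euler_criterion[OF p] by (simp add: cong_mult)
  ultimately have dvd: "int p dvd Legendre (a * b) (int p) - Legendre a (int p) * Legendre b (int p)"
    by (metis cong_iff_dvd_diff cong_sym cong_trans)
  have range: "Legendre x (int p) \<in> {-1, 0, 1}" for x
    by (auto simp: Legendre_def)
  have "Legendre (a * b) (int p) - Legendre a (int p) * Legendre b (int p) \<in> {-2, -1, 0, 1, 2}"
    using range[of "a * b"] range[of a] range[of b] by auto
  then have "int p dvd 2 \<or> int p dvd 1"
    using dvd ne by (auto simp del: dvd_1_iff_1)
  then show False
    using p by (auto dest: zdvd_imp_le)
qed

lemma Legendre_nonresidue_exists:
  assumes p: "prime p" "2 < p"
  shows "\<exists>g. \<not> int p dvd g \<and> Legendre g (int p) = -1"
proof -
  have "odd p"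
    using p prime_odd_nat by blast
  then obtain g where "\<forall>k>0. residue_primroot (p ^ k) g"
    using residue_primroot_odd_prime_power_exists[OF p(1)] by blast
  then have "residue_primroot p g"
    by (metis power_one_right zero_less_one)
  then have cop: "coprime p g" and ord: "ord p g = p - 1"
    using p totient_prime by (auto simp: residue_primroot_def)
  have ndvd: "\<not> int p dvd int g"
    using cop p by (metis coprime_absorb_left int_dvd_int_iff not_prime_unit)
  let ?k = "(p - 1) div 2"
  have "\<not> [g ^ ?k = 1] (mod p)"
  proof
    assume "[g ^ ?k = 1] (mod p)"
    then have "p - 1 dvd ?k"
      using ord by (simp add: ord_divides')
    moreover have "0 < ?k" "?k < p - 1"
      using p by auto
    ultimately show False
      by (simp add: nat_dvd_not_less)
  qed
  then have "\<not> [int g ^ ?k = 1] (mod int p)"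
    by (metis cong_int_iff of_nat_1 of_nat_power)
  then have "Legendre (int g) (int p) \<noteq> 1"
    using euler_criterion[OF p, of "int g"] cong_sym by fastforce
  then show ?thesis
    using Legendre_not_dvd[OF ndvd] ndvd by blast
qed

lemma Legendre_value_exists:
  assumes p: "prime p" "2 < p" and s: "s \<in> {1, -1}"
  shows "\<exists>u. \<not> int p dvd u \<and> Legendre u (int p) = s"
proof (cases "s = 1")
  case True
  have "\<not> int p dvd 1"
    using p by simp
  then show ?thesis
    using True Legendre_one[OF p(1)] by blast
next
  case False
  then show ?thesis
    using s Legendre_nonresidue_exists[OF p] by simp
qed

section \<open>Sign patterns of three-term zero sums of units\<close>

definition unit_zero_sum_signs :: "nat \<Rightarrow> int \<Rightarrow> int \<Rightarrow> int \<Rightarrow> bool" where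
  "unit_zero_sum_signs p c0 c1 c2 \<longleftrightarrow>
     (\<exists>t0 t1 t2. \<not> int p dvd t0 \<and> \<not> int p dvd t1 \<and> \<not> int p dvd t2 \<and>
        Legendre t0 (int p) = c0 \<and> Legendre t1 (int p) = c1 \<and> Legendre t2 (int p) = c2 \<and>
        [t0 + t1 + t2 = 0] (mod int p))"

lemma unit_zero_sum_signs_swap:
  assumes "unit_zero_sum_signs p c0 c1 c2"
  shows "unit_zero_sum_signs p c1 c0 c2" and "unit_zero_sum_signs p c0 c2 c1"
proof -
  obtain t0 t1 t2 where t: "\<not> int p dvd t0" "\<not> int p dvd t1" "\<not> int p dvd t2"
    "Legendre t0 (int p) = c0" "Legendre t1 (int p) = c1" "Legendre t2 (int p) = c2"
    "[t0 + t1 + t2 = 0] (mod int p)"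
    using assms unfolding unit_zero_sum_signs_def by blast
  have "[t1 + t0 + t2 = 0] (mod int p)" "[t0 + t2 + t1 = 0] (mod int p)"
    using t(7) by (simp_all add: ac_simps)
  then show "unit_zero_sum_signs p c1 c0 c2" "unit_zero_sum_signs p c0 c2 c1"
    unfolding unit_zero_sum_signs_def using t(1-6) by blast+
qed

lemma unit_zero_sum_signs_uminus:
  assumes p: "prime p" "2 < p" and "unit_zero_sum_signs p c0 c1 c2"
  shows "unit_zero_sum_signs p (- c0) (- c1) (- c2)"
proof -
  obtain g where g: "\<not> int p dvd g" "Legendre g (int p) = -1"
    using Legendre_nonresidue_exists[OF p] by blast
  obtain t0 t1 t2 where t: "\<not> int p dvd t0" "\<not> int p dvd t1" "\<not> int p dvd t2"
    "Legendre t0 (int p) = c0" "Legendre t1 (int p) = c1" "Legendre t2 (int p) = c2"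
    "[t0 + t1 + t2 = 0] (mod int p)"
    using assms(3) unfolding unit_zero_sum_signs_def by blast
  have "prime (int p)"
    using p by simp
  then have "\<not> int p dvd g * t" if "\<not> int p dvd t" for t
    using g(1) that by (simp add: prime_dvd_mult_iff)
  moreover have "[g * t0 + g * t1 + g * t2 = 0] (mod int p)"
    using cong_scalar_left[OF t(7), of g] by (simp add: algebra_simps)
  moreover have "Legendre (g * t) (int p) = - Legendre t (int p)" for t
    using Legendre_mult[OF p] g(2) by simp
  ultimately show ?thesis
    unfolding unit_zero_sum_signs_def using t(1-6) by blast
qed

text \<open>The zero sum \<open>3\<^sup>2 + 4\<^sup>2 - 5\<^sup>2\<close>; this is where \<open>p \<ge> 7\<close> is needed.\<close>
lemma unit_zero_sum_signs_Pythagorean: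
  assumes p: "prime p" "7 \<le> p"
  shows "unit_zero_sum_signs p 1 1 (Legendre (-1) (int p))"
proof -
  have pr: "prime (int p)"
    using p by simp
  have small: "\<not> int p dvd k" if "0 < k" "k < 7" for k :: int
    using p that by (auto dest: zdvd_imp_le)
  have sq: "\<not> int p dvd k ^ 2" "Legendre (k ^ 2) (int p) = 1" if "0 < k" "k < 7" for k :: int
    using small[OF that] pr prime_dvd_power Legendre_square[OF p(1)] by blast+
  have "Legendre (- (5 ^ 2)) (int p) = Legendre (-1) (int p)"
    using Legendre_mult[OF p(1), of "-1" "5 ^ 2"] sq[of 5] p by simp
  moreover have "[3 ^ 2 + 4 ^ 2 + - (5 ^ 2) = (0 :: int)] (mod int p)"
    by simp
  ultimately show ?thesis
    unfolding unit_zero_sum_signs_def using sq[of 3] sq[of 4] sq[of 5]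
    by (intro exI[of _ "3 ^ 2"] exI[of _ "4 ^ 2"] exI[of _ "- (5 ^ 2)"]) simp
qed

text \<open>The zero sum \<open>(m - 1) + 1 - m\<close> for the least positive nonresidue \<open>m\<close>.\<close>
lemma unit_zero_sum_signs_least_nonresidue:
  assumes p: "prime p" "2 < p"
  shows "unit_zero_sum_signs p 1 1 (- Legendre (-1) (int p))"
proof -
  let ?nonres = "\<lambda>k::nat. 0 < k \<and> Legendre (int k) (int p) = -1"
  obtain g where g: "\<not> int p dvd g" "Legendre g (int p) = -1"
    using Legendre_nonresidue_exists[OF p] by blast
  have "0 < g mod int p" "g mod int p < int p"
    using g(1) p by (auto simp: dvd_eq_mod_eq_0 intro: le_neq_trans)
  moreover have "Legendre (g mod int p) (int p) = -1"
    using g(2) Legendre_cong[of "g mod int p" g "int p"] by (simp add: cong_def)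
  ultimately have "?nonres (nat (g mod int p))" "nat (g mod int p) < p"
    by auto
  then obtain m where m: "?nonres m" "m < p" and least: "\<And>k. k < m \<Longrightarrow> \<not> ?nonres k"
    using exists_least_iff[of ?nonres] by (metis less_trans not_less_iff_gr_or_eq)
  have "m \<noteq> 1"
    using m(1) Legendre_one[OF p(1)] by auto
  then have m1: "0 < m - 1" "m - 1 < p"
    using m by auto
  have "\<not> int p dvd int (m - 1)" "\<not> int p dvd - int m" "\<not> int p dvd 1"
    using m m1 p by (auto dest: zdvd_imp_le)
  moreover have "Legendre (int (m - 1)) (int p) = 1"
    using least[of "m - 1"] m1 Legendre_not_dvd[OF \<open>\<not> int p dvd int (m - 1)\<close>] by auto
  moreover have "Legendre (- int m) (int p) = - Legendre (-1) (int p)"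
    using Legendre_mult[OF p, of "-1" "int m"] m(1) by simp
  moreover have "[int (m - 1) + 1 + - int m = 0] (mod int p)"
    using m1 by simp
  ultimately show ?thesis
    unfolding unit_zero_sum_signs_def using Legendre_one[OF p(1)]
    by (intro exI[of _ "int (m - 1)"] exI[of _ 1] exI[of _ "- int m"]) simp
qed

text \<open>Up to order and a common sign, every pattern is \<open>(1, 1, 1)\<close> or \<open>(1, 1, -1)\<close>, and the
  two zero sums above realise both of them.\<close>
lemma unit_zero_sum_signs_all:
  assumes p: "prime p" "7 \<le> p" and c: "c0 \<in> {1, -1}" "c1 \<in> {1, -1}" "c2 \<in> {1, -1}"
  shows "unit_zero_sum_signs p c0 c1 c2"
proof -
  have p2: "2 < p"
    using p by simp
  have "Legendre (-1) (int p) \<in> {1, -1}"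
    using Legendre_not_dvd p by simp
  then have pos: "unit_zero_sum_signs p 1 1 1" "unit_zero_sum_signs p 1 1 (-1)"
    using unit_zero_sum_signs_Pythagorean[OF p] unit_zero_sum_signs_least_nonresidue[OF p(1) p2]
    by auto
  note neg = pos[THEN unit_zero_sum_signs_uminus[OF p(1) p2], simplified]
  note swap = unit_zero_sum_signs_swap
  show ?thesis
    using c pos neg swap(2)[OF pos(2)] swap(1)[OF swap(2)[OF pos(2)]]
      swap(2)[OF neg(2)] swap(1)[OF swap(2)[OF neg(2)]]
    by auto
qed

section \<open>Zero sums modulo a prime with prescribed quadratic characters\<close>

definition legendre_zero_sum :: "nat \<Rightarrow> (nat \<Rightarrow> int) \<Rightarrow> nat set \<Rightarrow> (nat \<Rightarrow> int) \<Rightarrow> bool" where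
  "legendre_zero_sum p z J e \<longleftrightarrow>
     (\<exists>u. (\<forall>i\<in>J. \<not> int p dvd u i \<and> Legendre (u i) (int p) = e i) \<and>
        [(\<Sum>i\<in>J. u i * z i) = 0] (mod int p))"

lemma legendre_zero_sum_signs:
  assumes "legendre_zero_sum p z J e" "i \<in> J"
  shows "e i \<in> {1, -1}"
  using assms Legendre_not_dvd[of "int p"] unfolding legendre_zero_sum_def by metis

lemma legendre_zero_sum_cong_signs:
  assumes "\<And>i. i \<in> J \<Longrightarrow> e i = e' i"
  shows "legendre_zero_sum p z J e \<longleftrightarrow> legendre_zero_sum p z J e'"
  using assms unfolding legendre_zero_sum_def by auto

lemma legendre_zero_sum_mod:
  assumes "int p dvd m"
  shows "legendre_zero_sum p (\<lambda>i. z i mod m) J e \<longleftrightarrow> legendre_zero_sum p z J e"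
proof -
  have "[(\<Sum>i\<in>J. u i * (z i mod m)) = (\<Sum>i\<in>J. u i * z i)] (mod int p)" for u
    using assms by (intro cong_sum cong_mult cong_refl) (simp add: cong_def mod_mod_cancel)
  then show ?thesis
    unfolding legendre_zero_sum_def by (meson cong_sym cong_trans)
qed

lemma legendre_zero_sum_extend:
  assumes p: "prime p" "2 < p" and J: "finite J" "K \<subseteq> J"
    and dvd: "\<And>i. i \<in> J - K \<Longrightarrow> int p dvd z i" and e: "\<And>i. i \<in> J - K \<Longrightarrow> e i \<in> {1, -1}"
    and K: "legendre_zero_sum p z K e"
  shows "legendre_zero_sum p z J e"
proof -
  obtain u where u: "\<forall>i\<in>K. \<not> int p dvd u i \<and> Legendre (u i) (int p) = e i"
    "[(\<Sum>i\<in>K. u i * z i) = 0] (mod int p)"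
    using K unfolding legendre_zero_sum_def by blast
  have "\<forall>i\<in>J - K. \<exists>v. \<not> int p dvd v \<and> Legendre v (int p) = e i"
    using Legendre_value_exists[OF p e] by blast
  then obtain v where v: "\<forall>i\<in>J - K. \<not> int p dvd v i \<and> Legendre (v i) (int p) = e i"
    by metis
  define w where "w i = (if i \<in> K then u i else v i)" for i
  have "(\<Sum>i\<in>J. w i * z i) = (\<Sum>i\<in>K. u i * z i) + (\<Sum>i\<in>J - K. w i * z i)"
    using J by (simp add: w_def sum.subset_diff[of K J] add.commute)
  moreover have "int p dvd (\<Sum>i\<in>J - K. w i * z i)"
    using dvd by (intro dvd_sum) simp
  ultimately have "[(\<Sum>i\<in>J. w i * z i) = 0] (mod int p)"
    using u(2) by (simp add: cong_0_iff)
  moreover have "\<forall>i\<in>J. \<not> int p dvd w i \<and> Legendre (w i) (int p) = e i"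
    using u(1) v by (auto simp: w_def)
  ultimately show ?thesis
    unfolding legendre_zero_sum_def by blast
qed

lemma legendre_zero_sum_all_dvd:
  assumes "prime p" "2 < p" "finite J" "\<And>i. i \<in> J \<Longrightarrow> int p dvd z i"
    and "\<And>i. i \<in> J \<Longrightarrow> e i \<in> {1, -1}"
  shows "legendre_zero_sum p z J e"
  using legendre_zero_sum_extend[of p J "{}" z e] assms
  unfolding legendre_zero_sum_def by simp

lemma legendre_zero_sum_insert_dvd:
  assumes "prime p" "2 < p" "finite J" "k \<notin> J" "int p dvd z k" "legendre_zero_sum p z J s"
  shows "legendre_zero_sum p z (insert k J) (s(k := 1))"
proof -
  have "legendre_zero_sum p z J s \<longleftrightarrow> legendre_zero_sum p z J (s(k := 1))"
    by (rule legendre_zero_sum_cong_signs) (use assms(4) in auto)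
  then have "legendre_zero_sum p z J (s(k := 1))"
    using assms(6) by blast
  then show ?thesis
    using assms(1-5) by (intro legendre_zero_sum_extend[of p "insert k J" J]) auto
qed

lemma legendre_zero_sum_pair:
  assumes p: "prime p" "2 < p" and "i \<noteq> j" and z: "\<not> int p dvd z i" "\<not> int p dvd z j"
    and e: "e i \<in> {1, -1}" "e j \<in> {1, -1}" and c: "e i * e j = Legendre (- (z i * z j)) (int p)"
  shows "legendre_zero_sum p z {i, j} e"
proof -
  have lz: "Legendre (z j) (int p) \<in> {1, -1}"
    using Legendre_not_dvd[OF z(2)] .
  obtain f where f: "\<not> int p dvd f" "Legendre f (int p) = e i * Legendre (z j) (int p)"
    using Legendre_value_exists[OF p, of "e i * Legendre (z j) (int p)"] e lz by auto
  define u where "u k = (if k = i then z j * f else - z i * f)" for k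
  have "(\<Sum>k\<in>{i, j}. u k * z k) = 0"
    using \<open>i \<noteq> j\<close> by (simp add: u_def algebra_simps)
  moreover have "prime (int p)"
    using p by simp
  then have "\<not> int p dvd u i" "\<not> int p dvd u j"
    using z f \<open>i \<noteq> j\<close> by (simp_all add: u_def prime_dvd_mult_iff)
  moreover have "Legendre (u i) (int p) = e i"
    using lz by (auto simp: u_def Legendre_mult[OF p] f(2))
  moreover have "Legendre (u j) (int p) = e j"
  proof -
    have "u j = - z i * f" "- (z i * z j) = - z i * z j"
      using \<open>i \<noteq> j\<close> by (simp_all add: u_def)
    then have "Legendre (u j) (int p) = Legendre (- (z i * z j)) (int p) * e i"
      by (simp only: Legendre_mult[OF p] f(2) ac_simps)
    also have "\<dots> = e j * (e i * e i)"
      using c by (simp add: ac_simps)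
    finally show ?thesis
      using e(1) by auto
  qed
  ultimately show ?thesis
    unfolding legendre_zero_sum_def by (intro exI[of _ u]) auto
qed

text \<open>The weight of \<open>z\<^sub>i\<close> is \<open>t\<^sub>i\<close> times the other two terms, so that the weighted sum is
  \<open>(t\<^sub>0 + t\<^sub>1 + t\<^sub>2) z\<^sub>i z\<^sub>j z\<^sub>k\<close>.\<close>
lemma legendre_zero_sum_three_units:
  assumes p: "prime p" "7 \<le> p" and d: "i \<noteq> j" "i \<noteq> k" "j \<noteq> k"
    and z: "\<not> int p dvd z i" "\<not> int p dvd z j" "\<not> int p dvd z k"
    and e: "e i \<in> {1, -1}" "e j \<in> {1, -1}" "e k \<in> {1, -1}"
  shows "legendre_zero_sum p z {i, j, k} e"
proof -
  have p2: "2 < p"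
    using p by simp
  let ?L = "\<lambda>x. Legendre x (int p)"
  have lz: "?L (z i) \<in> {1, -1}" "?L (z j) \<in> {1, -1}" "?L (z k) \<in> {1, -1}"
    using z Legendre_not_dvd[of "int p"] by blast+
  have "unit_zero_sum_signs p (e i * ?L (z j) * ?L (z k)) (e j * ?L (z i) * ?L (z k))
      (e k * ?L (z i) * ?L (z j))"
    using e lz by (intro unit_zero_sum_signs_all[OF p]) auto
  then obtain t0 t1 t2 where t: "\<not> int p dvd t0" "\<not> int p dvd t1" "\<not> int p dvd t2"
    "?L t0 = e i * ?L (z j) * ?L (z k)" "?L t1 = e j * ?L (z i) * ?L (z k)"
    "?L t2 = e k * ?L (z i) * ?L (z j)" "[t0 + t1 + t2 = 0] (mod int p)"
    unfolding unit_zero_sum_signs_def by blast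
  define u where "u a = (if a = i then t0 * z j * z k else if a = j then t1 * z i * z k
    else t2 * z i * z j)" for a
  have "(\<Sum>a\<in>{i, j, k}. u a * z a) = (t0 + t1 + t2) * (z i * z j * z k)"
    using d by (simp add: u_def algebra_simps)
  then have "[(\<Sum>a\<in>{i, j, k}. u a * z a) = 0] (mod int p)"
    using cong_mult[OF t(7) cong_refl] by simp
  moreover have "prime (int p)"
    using p by simp
  then have "\<not> int p dvd u i" "\<not> int p dvd u j" "\<not> int p dvd u k"
    using d t z by (simp_all add: u_def prime_dvd_mult_iff)
  moreover have "?L (u i) = ?L t0 * ?L (z j) * ?L (z k)" "?L (u j) = ?L t1 * ?L (z i) * ?L (z k)"
    "?L (u k) = ?L t2 * ?L (z i) * ?L (z j)"
    using d by (simp_all add: u_def Legendre_mult[OF p(1) p2])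
  then have "?L (u i) = e i" "?L (u j) = e j" "?L (u k) = e k"
    using t(4-6) lz by auto
  ultimately show ?thesis
    unfolding legendre_zero_sum_def by (intro exI[of _ u]) auto
qed

lemma not_legendre_zero_sum_single:
  assumes p: "prime p" and J: "finite J" "i \<in> J"
    and z: "\<And>j. j \<in> J - {i} \<Longrightarrow> int p dvd z j" "\<not> int p dvd z i"
  shows "\<not> legendre_zero_sum p z J e"
proof
  assume "legendre_zero_sum p z J e"
  then obtain u where u: "\<forall>j\<in>J. \<not> int p dvd u j" "[(\<Sum>j\<in>J. u j * z j) = 0] (mod int p)"
    unfolding legendre_zero_sum_def by blast
  have "(\<Sum>j\<in>J. u j * z j) = u i * z i + (\<Sum>j\<in>J - {i}. u j * z j)"
    using J by (simp add: sum.remove)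
  moreover have "int p dvd (\<Sum>j\<in>J - {i}. u j * z j)"
    using z(1) by (intro dvd_sum) simp
  ultimately have "int p dvd u i * z i"
    using u(2) by (simp add: cong_0_iff dvd_add_left_iff)
  moreover have "prime (int p)"
    using p by simp
  ultimately show False
    using u(1) J(2) z(2) by (simp add: prime_dvd_mult_iff)
qed

lemma legendre_zero_sum_pair_extend:
  assumes p: "prime p" "7 \<le> p" and J: "finite J" "i \<in> J" "j \<in> J" "i \<noteq> j"
    and dvd: "\<And>k. k \<in> J - {i, j} \<Longrightarrow> int p dvd z k"
    and z: "\<not> int p dvd z i" "\<not> int p dvd z j"
    and s: "\<And>k. k \<in> J \<Longrightarrow> s k \<in> {1, -1}" and c: "s i * s j = Legendre (- (z i * z j)) (int p)"
  shows "legendre_zero_sum p z J s"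
proof (rule legendre_zero_sum_extend[of p J "{i, j}"])
  show "legendre_zero_sum p z {i, j} s"
    using p J z s c by (intro legendre_zero_sum_pair) auto
qed (use p J dvd s in auto)

lemma legendre_zero_sum_three_units_extend:
  assumes p: "prime p" "7 \<le> p" and J: "finite J" "card {i \<in> J. \<not> int p dvd z i} = 3"
    and s: "\<And>k. k \<in> J \<Longrightarrow> s k \<in> {1, -1}"
  shows "legendre_zero_sum p z J s"
proof -
  obtain i j k where N: "{i \<in> J. \<not> int p dvd z i} = {i, j, k}" and d: "i \<noteq> j" "j \<noteq> k" "i \<noteq> k"
    using J(2) unfolding card_3_iff by blast
  then have "i \<in> J" "j \<in> J" "k \<in> J" "\<not> int p dvd z i" "\<not> int p dvd z j" "\<not> int p dvd z k"
    by blast+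
  then have "legendre_zero_sum p z {i, j, k} s"
    using p d s by (intro legendre_zero_sum_three_units) auto
  then show ?thesis
    using p J s N by (intro legendre_zero_sum_extend[of p J "{i, j, k}"]) auto
qed

lemma legendre_zero_sum_exists:
  assumes p: "prime p" "7 \<le> p" and J: "finite J"
    and N: "card {i \<in> J. \<not> int p dvd z i} \<noteq> 1" "card {i \<in> J. \<not> int p dvd z i} \<le> 3"
  shows "\<exists>e. legendre_zero_sum p z J e"
proof -
  let ?N = "{i \<in> J. \<not> int p dvd z i}"
  consider "card ?N = 0" | "card ?N = 2" | "card ?N = 3"
    using N by linarith
  then show ?thesis
  proof cases
    case 1
    then have "?N = {}"
      using J by simp
    then have "legendre_zero_sum p z J (\<lambda>_. 1)"
      using p J by (intro legendre_zero_sum_all_dvd) auto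
    then show ?thesis by blast
  next
    case 2
    then obtain i j where ij: "?N = {i, j}" "i \<noteq> j"
      unfolding card_2_iff by blast
    then have "i \<in> ?N" "j \<in> ?N"
      by auto
    then have "\<not> int p dvd (- (z i * z j))"
      using p by (simp add: prime_dvd_mult_iff)
    then have "Legendre (- (z i * z j)) (int p) \<in> {1, -1}"
      by (rule Legendre_not_dvd)
    then have "legendre_zero_sum p z J (\<lambda>k. if k = j then Legendre (- (z i * z j)) (int p) else 1)"
      using p J ij \<open>i \<in> ?N\<close> \<open>j \<in> ?N\<close> by (intro legendre_zero_sum_pair_extend) auto
    then show ?thesis by blast
  next
    case 3
    then have "legendre_zero_sum p z J (\<lambda>_. 1)"
      using p J by (intro legendre_zero_sum_three_units_extend) auto
    then show ?thesis by blast
  qed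
qed

lemma legendre_zero_sum_at_most_one_dvd:
  assumes p: "prime p" "7 \<le> p" and I: "I = {k, i, j}" "k \<noteq> i" "k \<noteq> j" "i \<noteq> j"
    and D: "{t \<in> I. int p dvd z t} \<subseteq> {k}"
    and s: "\<And>t. t \<in> I \<Longrightarrow> s t \<in> {1, -1}" and c: "s i * s j = Legendre (- (z i * z j)) (int p)"
  shows "legendre_zero_sum p z I s"
proof (cases "int p dvd z k")
  case True
  then show ?thesis
    using p I D s c by (intro legendre_zero_sum_pair_extend) auto
next
  case False
  then have "{t \<in> I. \<not> int p dvd z t} = {k, i, j}"
    using I D by auto
  then show ?thesis
    using p I s by (intro legendre_zero_sum_three_units_extend) auto
qed

lemma common_legendre_zero_sum_separated:
  assumes q: "prime q" "7 \<le> q" and r: "prime r" "7 \<le> r"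
    and I: "I = {a, b, m}" "a \<noteq> b" "a \<noteq> m" "b \<noteq> m"
    and Dq: "{t \<in> I. int q dvd z t} \<subseteq> {a}" and Dr: "{t \<in> I. int r dvd z t} \<subseteq> {b}"
  shows "\<exists>s. legendre_zero_sum q z I s \<and> legendre_zero_sum r z I s"
proof -
  define cq where "cq = Legendre (- (z b * z m)) (int q)"
  define cr where "cr = Legendre (- (z a * z m)) (int r)"
  have "\<not> int q dvd - (z b * z m)" "\<not> int r dvd - (z a * z m)"
    using q r I Dq Dr by (auto simp: prime_dvd_mult_iff)
  then have "cq \<in> {1, -1}" "cr \<in> {1, -1}"
    unfolding cq_def cr_def using Legendre_not_dvd by blast+
  text \<open>\<open>q\<close> constrains the signs at \<open>b, m\<close> and \<open>r\<close> those at \<open>a, m\<close>; fix \<open>s m = 1\<close>.\<close>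
  define s where "s t = (if t = b then cq else if t = a then cr else 1)" for t
  have s1: "s t \<in> {1, -1}" for t
    using \<open>cq \<in> {1, -1}\<close> \<open>cr \<in> {1, -1}\<close> by (simp add: s_def)
  have "legendre_zero_sum q z I s"
    using q I Dq s1 by (intro legendre_zero_sum_at_most_one_dvd[of q I a b m]) (auto simp: s_def cq_def)
  moreover have "legendre_zero_sum r z I s"
    using r I Dr s1 by (intro legendre_zero_sum_at_most_one_dvd[of r I b a m]) (auto simp: s_def cr_def)
  ultimately show ?thesis
    by blast
qed

lemma common_legendre_zero_sum_at_most_one_dvd:
  assumes q: "prime q" "7 \<le> q" and r: "prime r" "7 \<le> r" and I: "finite I" "card I = 3"
    and Dq: "card {t \<in> I. int q dvd z t} \<le> 1" and Dr: "card {t \<in> I. int r dvd z t} \<le> 1"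
    and disj: "\<And>t. t \<in> I \<Longrightarrow> \<not> (int q dvd z t \<and> int r dvd z t)"
  shows "\<exists>s. legendre_zero_sum q z I s \<and> legendre_zero_sum r z I s"
proof -
  let ?Dq = "{t \<in> I. int q dvd z t}" and ?Dr = "{t \<in> I. int r dvd z t}"
  have "card (?Dq \<union> ?Dr) \<le> 2"
    using Dq Dr card_Un_le[of ?Dq ?Dr] by linarith
  then have "\<not> I \<subseteq> ?Dq \<union> ?Dr"
    using I card_mono[of "?Dq \<union> ?Dr" I] by auto
  then obtain m where m: "m \<in> I" "m \<notin> ?Dq \<union> ?Dr"
    by blast
  have "card (I - {m}) = 2"
    using I m(1) by simp
  then obtain a b where ab: "I - {m} = {a, b}" "a \<noteq> b"
    unfolding card_2_iff by blast
  then have I': "I = {a, b, m}" "a \<noteq> m" "b \<noteq> m"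
    using m(1) by auto
  have "?Dq \<subseteq> {a, b}" "?Dr \<subseteq> {a, b}"
    using ab m by auto
  moreover have "\<forall>x\<in>?Dq. \<forall>y\<in>?Dq. x = y" "\<forall>x\<in>?Dr. \<forall>y\<in>?Dr. x = y"
    using Dq Dr I(1) by (simp_all add: card_le_Suc0_iff_eq)
  ultimately have "(?Dq \<subseteq> {a} \<and> ?Dr \<subseteq> {b}) \<or> (?Dq \<subseteq> {b} \<and> ?Dr \<subseteq> {a})"
    using disj ab(2) by blast
  then show ?thesis
  proof
    assume "?Dq \<subseteq> {a} \<and> ?Dr \<subseteq> {b}"
    then show ?thesis
      using q r I' ab(2) by (intro common_legendre_zero_sum_separated[of q r I a b m]) auto
  next
    assume "?Dq \<subseteq> {b} \<and> ?Dr \<subseteq> {a}"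
    then show ?thesis
      using q r I' ab(2) by (intro common_legendre_zero_sum_separated[of q r I b a m]) auto
  qed
qed

lemma common_legendre_zero_sum_pair:
  assumes p: "prime p" "7 \<le> p" and p': "prime p'" "7 \<le> p'" and "finite I"
    and two: "\<not> card {t \<in> I. int p dvd z t} \<le> 1"
    and disj: "\<And>t. t \<in> I \<Longrightarrow> \<not> (int p dvd z t \<and> int p' dvd z t)"
  shows "\<exists>J\<subseteq>I. J \<noteq> {} \<and> (\<exists>s. legendre_zero_sum p z J s \<and> legendre_zero_sum p' z J s)"
proof -
  obtain j k where jk: "j \<in> I" "k \<in> I" "j \<noteq> k" "int p dvd z j" "int p dvd z k"
    using two \<open>finite I\<close> by (auto simp: card_le_Suc0_iff_eq)
  then have nd: "\<not> int p' dvd z j" "\<not> int p' dvd z k"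
    using disj by auto
  define c where "c = Legendre (- (z j * z k)) (int p')"
  have "\<not> int p' dvd - (z j * z k)"
    using p' nd by (simp add: prime_dvd_mult_iff)
  then have "c \<in> {1, -1}"
    unfolding c_def by (rule Legendre_not_dvd)
  define s where "s t = (if t = k then c else 1)" for t
  have "legendre_zero_sum p z {j, k} s"
    using p jk \<open>c \<in> {1, -1}\<close> by (intro legendre_zero_sum_all_dvd) (auto simp: s_def)
  moreover have "legendre_zero_sum p' z {j, k} s"
    using p' jk nd \<open>c \<in> {1, -1}\<close> by (intro legendre_zero_sum_pair) (auto simp: s_def c_def)
  ultimately show ?thesis
    using jk(1,2) by (intro exI[of _ "{j, k}"]) auto
qed

text \<open>The upper bound \<open>D\<^bsub>S(qr)\<^esub>(qr) \<le> 3\<close>, in terms of local solutions.\<close>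
lemma common_legendre_zero_sum_exists:
  assumes q: "prime q" "7 \<le> q" and r: "prime r" "7 \<le> r" and I: "finite I" "card I = 3"
  shows "\<exists>J\<subseteq>I. J \<noteq> {} \<and> (\<exists>s. legendre_zero_sum q z J s \<and> legendre_zero_sum r z J s)"
proof (cases "\<exists>i\<in>I. int q dvd z i \<and> int r dvd z i")
  case True
  then obtain i where i: "i \<in> I" "int q dvd z i" "int r dvd z i"
    by blast
  then have "legendre_zero_sum q z {i} (\<lambda>_. 1)" "legendre_zero_sum r z {i} (\<lambda>_. 1)"
    using q r by (auto intro: legendre_zero_sum_all_dvd)
  then show ?thesis
    using i(1) by blast
next
  case False
  then have disj: "\<And>t. t \<in> I \<Longrightarrow> \<not> (int q dvd z t \<and> int r dvd z t)"
    by blast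
  consider "card {t \<in> I. int q dvd z t} \<le> 1" "card {t \<in> I. int r dvd z t} \<le> 1"
    | "\<not> card {t \<in> I. int q dvd z t} \<le> 1" | "\<not> card {t \<in> I. int r dvd z t} \<le> 1"
    by blast
  then show ?thesis
  proof cases
    case 1
    then have "\<exists>s. legendre_zero_sum q z I s \<and> legendre_zero_sum r z I s"
      using disj by (intro common_legendre_zero_sum_at_most_one_dvd[OF q r I])
    moreover have "I \<noteq> {}"
      using I by auto
    ultimately show ?thesis
      by blast
  next
    case 2
    then show ?thesis
      using common_legendre_zero_sum_pair[OF q r I(1)] disj by blast
  next
    case 3
    then have "\<exists>J\<subseteq>I. J \<noteq> {} \<and> (\<exists>s. legendre_zero_sum r z J s \<and> legendre_zero_sum q z J s)"
      using disj by (intro common_legendre_zero_sum_pair[OF r q I(1)]) auto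
    then show ?thesis
      by blast
  qed
qed

lemma common_legendre_zero_sum_if_dvd_all:
  assumes a: "prime a" "7 \<le> a" and b: "prime b" "7 \<le> b" and c: "prime c" "2 < c"
    and I: "finite I" "card I = 3" and dvd: "\<And>i. i \<in> I \<Longrightarrow> int c dvd z i"
  shows "\<exists>J\<subseteq>I. J \<noteq> {} \<and> (\<exists>s. \<forall>p\<in>{a, b, c}. legendre_zero_sum p z J s)"
proof -
  obtain J s where J: "J \<subseteq> I" "J \<noteq> {}" and s: "legendre_zero_sum a z J s" "legendre_zero_sum b z J s"
    using common_legendre_zero_sum_exists[OF a b I] by blast
  moreover have "legendre_zero_sum c z J s"
    using c J I(1) dvd legendre_zero_sum_signs[OF s(1)]
    by (intro legendre_zero_sum_all_dvd) (auto intro: finite_subset)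
  ultimately show ?thesis
    by blast
qed

section \<open>Weighted zero sums over sets of indices\<close>

text \<open>A sequence is a function on indices, and a subsequence is a set of indices.\<close>
definition weighted_zero_sum_on :: "nat \<Rightarrow> int set \<Rightarrow> (nat \<Rightarrow> int) \<Rightarrow> nat set \<Rightarrow> bool" where
  "weighted_zero_sum_on m A z J \<longleftrightarrow>
     (\<exists>a. (\<forall>i\<in>J. a i \<in> A) \<and> [(\<Sum>i\<in>J. a i * z i) = 0] (mod int m))"

definition zero_sum_free_on :: "nat \<Rightarrow> int set \<Rightarrow> (nat \<Rightarrow> int) \<Rightarrow> nat set \<Rightarrow> bool" where
  "zero_sum_free_on m A z I \<longleftrightarrow> (\<forall>J\<subseteq>I. J \<noteq> {} \<longrightarrow> \<not> weighted_zero_sum_on m A z J)"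

lemma weighted_zero_sum_on_mono:
  "A \<subseteq> B \<Longrightarrow> weighted_zero_sum_on m A z J \<Longrightarrow> weighted_zero_sum_on m B z J"
  unfolding weighted_zero_sum_on_def by blast

lemma weighted_zero_sum_on_singleton:
  "1 \<in> A \<Longrightarrow> int m dvd z i \<Longrightarrow> weighted_zero_sum_on m A z {i}"
  unfolding weighted_zero_sum_on_def by (intro exI[of _ "\<lambda>_. 1"]) (simp add: cong_0_iff)

lemma weighted_zero_sum_on_reindex:
  assumes "inj_on h J"
  shows "weighted_zero_sum_on m A (z \<circ> h) J \<longleftrightarrow> weighted_zero_sum_on m A z (h ` J)"
proof
  assume "weighted_zero_sum_on m A (z \<circ> h) J"
  then obtain a where a: "\<forall>i\<in>J. a i \<in> A" "[(\<Sum>i\<in>J. a i * z (h i)) = 0] (mod int m)"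
    unfolding weighted_zero_sum_on_def by auto
  define b where "b = a \<circ> inv_into J h"
  have "b (h i) = a i" if "i \<in> J" for i
    using assms that by (simp add: b_def)
  then have "(\<Sum>i\<in>h ` J. b i * z i) = (\<Sum>i\<in>J. a i * z (h i))" "\<forall>i\<in>h ` J. b i \<in> A"
    using assms a(1) by (simp_all add: sum.reindex)
  then show "weighted_zero_sum_on m A z (h ` J)"
    unfolding weighted_zero_sum_on_def using a(2) by (intro exI[of _ b]) simp
next
  assume "weighted_zero_sum_on m A z (h ` J)"
  then obtain b where "\<forall>i\<in>h ` J. b i \<in> A" "[(\<Sum>i\<in>h ` J. b i * z i) = 0] (mod int m)"
    unfolding weighted_zero_sum_on_def by auto
  then show "weighted_zero_sum_on m A (z \<circ> h) J"
    unfolding weighted_zero_sum_on_def using assms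
    by (intro exI[of _ "b \<circ> h"]) (simp add: sum.reindex)
qed

lemma zero_sum_free_on_subset:
  "zero_sum_free_on m A z I \<Longrightarrow> I' \<subseteq> I \<Longrightarrow> zero_sum_free_on m A z I'"
  unfolding zero_sum_free_on_def by blast

lemma zero_sum_free_on_mono:
  "A \<subseteq> B \<Longrightarrow> zero_sum_free_on m B z I \<Longrightarrow> zero_sum_free_on m A z I"
  unfolding zero_sum_free_on_def using weighted_zero_sum_on_mono[of A B m z] by blast

lemma weighted_zero_sum_iff_on:
  "weighted_zero_sum m A xs \<longleftrightarrow> weighted_zero_sum_on m A (\<lambda>i. xs ! i) {..<length xs}"
  unfolding weighted_zero_sum_def weighted_zero_sum_on_def by auto

lemma weighted_zero_sum_map:
  assumes "distinct L"
  shows "weighted_zero_sum m A (map z L) \<longleftrightarrow> weighted_zero_sum_on m A z (set L)"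
proof -
  have "inj_on ((!) L) {..<length L}"
    using assms by (simp add: inj_on_def nth_eq_iff_index_eq)
  moreover have "(!) L ` {..<length L} = set L"
    by (auto simp: set_conv_nth)
  moreover have "(\<Sum>i<length L. a i * map z L ! i) = (\<Sum>i<length L. a i * (z \<circ> (!) L) i)" for a
    by (rule sum.cong) auto
  then have "weighted_zero_sum_on m A (\<lambda>i. map z L ! i) {..<length L} \<longleftrightarrow>
      weighted_zero_sum_on m A (z \<circ> (!) L) {..<length L}"
    unfolding weighted_zero_sum_on_def by simp
  ultimately show ?thesis
    unfolding weighted_zero_sum_iff_on by (simp add: weighted_zero_sum_on_reindex)
qed

lemma has_wzs_subseq_map_iff:
  assumes "distinct L"
  shows "has_wzs_subseq m A (map z L) \<longleftrightarrow>
    (\<exists>J\<subseteq>set L. J \<noteq> {} \<and> weighted_zero_sum_on m A z J)"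
proof
  assume "has_wzs_subseq m A (map z L)"
  then obtain I where "I \<subseteq> {..<length L}" "I \<noteq> {}" "weighted_zero_sum m A (map z (nths L I))"
    unfolding has_wzs_subseq_def by (auto simp: nths_map)
  moreover have "set (nths L I) \<noteq> {}"
    using \<open>I \<subseteq> {..<length L}\<close> \<open>I \<noteq> {}\<close> by (auto simp: set_nths)
  ultimately show "\<exists>J\<subseteq>set L. J \<noteq> {} \<and> weighted_zero_sum_on m A z J"
    using assms set_nths_subset[of L I] weighted_zero_sum_map[of "nths L I" m A z] by auto
next
  assume "\<exists>J\<subseteq>set L. J \<noteq> {} \<and> weighted_zero_sum_on m A z J"
  then obtain J where J: "J \<subseteq> set L" "J \<noteq> {}" "weighted_zero_sum_on m A z J"
    by blast
  define I where "I = {i. i < length L \<and> L ! i \<in> J}"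
  have "set (nths L I) = J"
  proof
    show "J \<subseteq> set (nths L I)"
    proof
      fix x
      assume "x \<in> J"
      then have "x \<in> set L"
        using J(1) by blast
      then obtain i where "i < length L" "L ! i = x"
        by (auto simp: in_set_conv_nth)
      then show "x \<in> set (nths L I)"
        using \<open>x \<in> J\<close> by (auto simp: I_def set_nths)
    qed
  qed (auto simp: I_def set_nths)
  then have "weighted_zero_sum m A (nths (map z L) I)"
    using J(3) assms by (simp add: nths_map weighted_zero_sum_map)
  moreover have "I \<noteq> {}"
    using \<open>set (nths L I) = J\<close> J(2) by (metis empty_set nths_empty)
  moreover have "I \<subseteq> {..<length L}"
    by (auto simp: I_def)
  ultimately show "has_wzs_subseq m A (map z L)"
    unfolding has_wzs_subseq_def by (intro exI[of _ I]) simp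
qed

lemma not_has_wzs_subseq_iff:
  "\<not> has_wzs_subseq m A xs \<longleftrightarrow> zero_sum_free_on m A (\<lambda>i. xs ! i) {..<length xs}"
  using has_wzs_subseq_map_iff[of "[0..<length xs]" m A "\<lambda>i. xs ! i"]
  by (auto simp: map_nth zero_sum_free_on_def atLeast0LessThan)

section \<open>The local-global principle\<close>

lemma coprime_prime_iff_not_dvd:
  assumes "prime p"
  shows "coprime a (int p) \<longleftrightarrow> \<not> int p dvd a"
proof
  assume "coprime a (int p)"
  then show "\<not> int p dvd a"
    using assms coprime_common_divisor[of a "int p" "int p"] by auto
next
  assume "\<not> int p dvd a"
  then show "coprime a (int p)"
    using assms prime_imp_coprime[of "int p" a] by (simp add: coprime_commute)
qed

lemma units_mod_not_dvd:
  assumes "a \<in> units_mod m" "prime p" "p dvd m"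
  shows "\<not> int p dvd a"
proof -
  have "coprime a (int m)" "int p dvd int m"
    using assms(1,3) unfolding units_mod_def by auto
  then have "coprime a (int p)"
    using coprime_divisors[OF dvd_refl] by blast
  then show ?thesis
    using assms(2) coprime_prime_iff_not_dvd by blast
qed

lemma jsym_distinct_primes:
  assumes "finite Q" "\<And>p. p \<in> Q \<Longrightarrow> prime p"
  shows "jsym a (\<Prod>Q) = (\<Prod>p\<in>Q. Legendre a (int p))"
proof -
  have "prime_factorization (\<Prod>Q) = (\<Sum>p\<in>Q. prime_factorization p)"
    using assms by (intro prime_factorization_prod) (auto simp: prime_gt_0_nat)
  also have "\<dots> = (\<Sum>p\<in>Q. {#p#})"
    using assms by (intro sum.cong) (auto simp: prime_factorization_prime)
  finally have pf: "prime_factorization (\<Prod>Q) = mset_set Q"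
    by simp
  then have "multiplicity p (\<Prod>Q) = 1" if "p \<in> Q" for p
    using assms that count_prime_factorization_prime[of p "\<Prod>Q"] by simp
  then show ?thesis
    unfolding jsym_def pf using assms(1) by simp
qed

lemma jsym_two_primes:
  assumes "prime q" "prime r" "q \<noteq> r"
  shows "jsym a (q * r) = Legendre a (int q) * Legendre a (int r)"
  using jsym_distinct_primes[of "{q, r}" a] assms by auto

lemma jsym_three_primes:
  assumes "prime P" "prime q" "prime r" "P \<noteq> q" "P \<noteq> r" "q \<noteq> r"
  shows "jsym a (P * q * r) = Legendre a (int P) * Legendre a (int q) * Legendre a (int r)"
  using jsym_distinct_primes[of "{P, q, r}" a] assms by (auto simp: ac_simps)

lemma Sgrp_subset_units_mod: "Sgrp m \<subseteq> units_mod m"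
  unfolding Sgrp_def by blast

lemma Sgrp_two_primes_iff:
  assumes "prime q" "prime r" "q \<noteq> r"
  shows "a \<in> Sgrp (q * r) \<longleftrightarrow> a \<in> Zmod (q * r) \<and> \<not> int q dvd a \<and> \<not> int r dvd a \<and>
    Legendre a (int q) = Legendre a (int r)"
proof -
  have cop: "coprime a (int (q * r)) \<longleftrightarrow> \<not> int q dvd a \<and> \<not> int r dvd a"
    using assms coprime_prime_iff_not_dvd by simp
  have "Legendre a (int q) * Legendre a (int r) = 1 \<longleftrightarrow> Legendre a (int q) = Legendre a (int r)"
    if "\<not> int q dvd a" "\<not> int r dvd a"
    using Legendre_not_dvd[OF that(1)] Legendre_not_dvd[OF that(2)] by auto
  then show ?thesis
    unfolding Sgrp_def units_mod_def using cop jsym_two_primes[OF assms] by auto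
qed

lemma Lgrp_three_primes_iff:
  assumes "prime P" "prime q" "prime r" "P \<noteq> q" "P \<noteq> r" "q \<noteq> r"
  shows "a \<in> Lgrp (P * q * r) P \<longleftrightarrow> a \<in> Zmod (P * q * r) \<and> \<not> int P dvd a \<and>
    \<not> int q dvd a \<and> \<not> int r dvd a \<and> Legendre a (int q) = Legendre a (int r)"
proof -
  have cop: "coprime a (int (P * q * r)) \<longleftrightarrow> \<not> int P dvd a \<and> \<not> int q dvd a \<and> \<not> int r dvd a"
    using assms coprime_prime_iff_not_dvd by simp
  have "Legendre a (int P) * Legendre a (int q) * Legendre a (int r) = Legendre a (int P) \<longleftrightarrow>
      Legendre a (int q) = Legendre a (int r)"
    if "\<not> int P dvd a" "\<not> int q dvd a" "\<not> int r dvd a"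
    using Legendre_not_dvd[OF that(1)] Legendre_not_dvd[OF that(2)] Legendre_not_dvd[OF that(3)]
    by auto
  then show ?thesis
    unfolding Lgrp_def units_mod_def using cop jsym_three_primes[OF assms] by auto
qed

lemma weights_chinese_remainder:
  fixes m1 m2 :: nat
  assumes cop: "coprime m1 m2" and pos: "0 < m1" "0 < m2"
    and s1: "[(\<Sum>i\<in>J. u1 i * z i) = 0] (mod int m1)"
    and s2: "[(\<Sum>i\<in>J. u2 i * z i) = 0] (mod int m2)"
  obtains a where "\<And>i. a i \<in> Zmod (m1 * m2)" "\<And>i. [a i = u1 i] (mod int m1)"
    "\<And>i. [a i = u2 i] (mod int m2)" "[(\<Sum>i\<in>J. a i * z i) = 0] (mod int (m1 * m2))"
proof -
  have icop: "coprime (int m1) (int m2)"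
    using cop by simp
  have "\<exists>x. x \<in> Zmod (m1 * m2) \<and> [x = u1 i] (mod int m1) \<and> [x = u2 i] (mod int m2)" for i
  proof -
    obtain y where y: "[y = u1 i] (mod int m1)" "[y = u2 i] (mod int m2)"
      using binary_chinese_remainder_int[OF icop] by blast
    have "[y mod int (m1 * m2) = y] (mod int m1)" "[y mod int (m1 * m2) = y] (mod int m2)"
      by (simp_all add: cong_def mod_mod_cancel)
    moreover have "y mod int (m1 * m2) \<in> Zmod (m1 * m2)"
      using pos by (simp add: Zmod_def)
    ultimately show ?thesis
      using y cong_trans by blast
  qed
  then obtain a where a: "\<And>i. a i \<in> Zmod (m1 * m2)" "\<And>i. [a i = u1 i] (mod int m1)"
    "\<And>i. [a i = u2 i] (mod int m2)"
    by metis
  have "[(\<Sum>i\<in>J. a i * z i) = (\<Sum>i\<in>J. u1 i * z i)] (mod int m1)"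
    "[(\<Sum>i\<in>J. a i * z i) = (\<Sum>i\<in>J. u2 i * z i)] (mod int m2)"
    using a by (auto intro!: cong_sum cong_mult)
  then have "[(\<Sum>i\<in>J. a i * z i) = 0] (mod int m1)" "[(\<Sum>i\<in>J. a i * z i) = 0] (mod int m2)"
    using s1 s2 cong_trans by blast+
  then have "[(\<Sum>i\<in>J. a i * z i) = 0] (mod int (m1 * m2))"
    using coprime_cong_mult[OF _ _ icop] by simp
  then show thesis
    using a that by blast
qed

lemma legendre_zero_sum_of_weights:
  assumes "\<And>i. i \<in> J \<Longrightarrow> \<not> int p dvd a i" "[(\<Sum>i\<in>J. a i * z i) = 0] (mod int m)" "p dvd m"
  shows "legendre_zero_sum p z J (\<lambda>i. Legendre (a i) (int p))"
proof -
  have "[(\<Sum>i\<in>J. a i * z i) = 0] (mod int p)"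
    using assms(2,3) by (metis cong_dvd_modulus int_dvd_int_iff)
  then show ?thesis
    unfolding legendre_zero_sum_def using assms(1) by blast
qed

lemma legendre_zero_sum_of_weighted_zero_sum:
  assumes "weighted_zero_sum_on m A z J" "A \<subseteq> units_mod m" "prime p" "p dvd m"
  shows "\<exists>e. legendre_zero_sum p z J e"
proof -
  obtain a where "\<forall>i\<in>J. a i \<in> A" "[(\<Sum>i\<in>J. a i * z i) = 0] (mod int m)"
    using assms(1) unfolding weighted_zero_sum_on_def by blast
  then have "legendre_zero_sum p z J (\<lambda>i. Legendre (a i) (int p))"
    using assms(2-4) units_mod_not_dvd by (intro legendre_zero_sum_of_weights) blast+
  then show ?thesis
    by blast
qed

lemma common_legendre_zero_sum_of_Sgrp:
  assumes q: "prime q" and r: "prime r" and "q \<noteq> r"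
    and "weighted_zero_sum_on (q * r) (Sgrp (q * r)) z J"
  shows "\<exists>s. legendre_zero_sum q z J s \<and> legendre_zero_sum r z J s"
proof -
  obtain a where a: "\<forall>i\<in>J. a i \<in> Sgrp (q * r)" "[(\<Sum>i\<in>J. a i * z i) = 0] (mod int (q * r))"
    using assms(4) unfolding weighted_zero_sum_on_def by blast
  then have a': "\<forall>i\<in>J. \<not> int q dvd a i \<and> \<not> int r dvd a i \<and>
      Legendre (a i) (int r) = Legendre (a i) (int q)"
    using Sgrp_two_primes_iff[OF q r \<open>q \<noteq> r\<close>] by auto
  then have "legendre_zero_sum q z J (\<lambda>i. Legendre (a i) (int q))"
    using a(2) by (intro legendre_zero_sum_of_weights[where m = "q * r"]) auto
  moreover have "legendre_zero_sum r z J (\<lambda>i. Legendre (a i) (int r))"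
    using a(2) a' by (intro legendre_zero_sum_of_weights[where m = "q * r"]) auto
  then have "legendre_zero_sum r z J (\<lambda>i. Legendre (a i) (int q))"
    using a' legendre_zero_sum_cong_signs[of J "\<lambda>i. Legendre (a i) (int r)"] by auto
  ultimately show ?thesis
    by blast
qed

lemma Sgrp_weights_of_common_signs:
  assumes q: "prime q" "2 < q" and r: "prime r" "2 < r" and "q \<noteq> r"
    and sq: "legendre_zero_sum q z J s" and sr: "legendre_zero_sum r z J s"
  obtains a where "\<And>i. i \<in> J \<Longrightarrow> a i \<in> Sgrp (q * r)" "[(\<Sum>i\<in>J. a i * z i) = 0] (mod int (q * r))"
proof -
  obtain uq where uq: "\<forall>i\<in>J. \<not> int q dvd uq i \<and> Legendre (uq i) (int q) = s i"
    "[(\<Sum>i\<in>J. uq i * z i) = 0] (mod int q)"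
    using sq unfolding legendre_zero_sum_def by blast
  obtain ur where ur: "\<forall>i\<in>J. \<not> int r dvd ur i \<and> Legendre (ur i) (int r) = s i"
    "[(\<Sum>i\<in>J. ur i * z i) = 0] (mod int r)"
    using sr unfolding legendre_zero_sum_def by blast
  have "coprime q r"
    using q r \<open>q \<noteq> r\<close> by (simp add: primes_coprime)
  then obtain a where a: "\<And>i. a i \<in> Zmod (q * r)" "\<And>i. [a i = uq i] (mod int q)"
    "\<And>i. [a i = ur i] (mod int r)" "[(\<Sum>i\<in>J. a i * z i) = 0] (mod int (q * r))"
    using weights_chinese_remainder[OF _ _ _ uq(2) ur(2)] q r by (auto simp: prime_gt_0_nat)
  have "a i \<in> Sgrp (q * r)" if "i \<in> J" for i
    unfolding Sgrp_two_primes_iff[OF q(1) r(1) \<open>q \<noteq> r\<close>]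
    using a(1) uq(1) ur(1) that a(2)[of i] a(3)[of i] Legendre_cong cong_dvd_iff by metis
  then show thesis
    using that a(4) by blast
qed

lemma Sgrp_zero_sum_of_common_signs:
  assumes "prime q" "2 < q" "prime r" "2 < r" "q \<noteq> r"
    and "legendre_zero_sum q z J s" "legendre_zero_sum r z J s"
  shows "weighted_zero_sum_on (q * r) (Sgrp (q * r)) z J"
  using Sgrp_weights_of_common_signs[OF assms] unfolding weighted_zero_sum_on_def by metis

lemma Lgrp_zero_sum_of_signs:
  assumes P: "prime P" "2 < P" and q: "prime q" "2 < q" and r: "prime r" "2 < r"
    and d: "P \<noteq> q" "P \<noteq> r" "q \<noteq> r"
    and sP: "legendre_zero_sum P z J e" and sq: "legendre_zero_sum q z J s"
    and sr: "legendre_zero_sum r z J s"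
  shows "weighted_zero_sum_on (P * q * r) (Lgrp (P * q * r) P) z J"
proof -
  obtain uP where uP: "\<forall>i\<in>J. \<not> int P dvd uP i" "[(\<Sum>i\<in>J. uP i * z i) = 0] (mod int P)"
    using sP unfolding legendre_zero_sum_def by blast
  obtain b where b: "\<And>i. i \<in> J \<Longrightarrow> b i \<in> Sgrp (q * r)"
    "[(\<Sum>i\<in>J. b i * z i) = 0] (mod int (q * r))"
    using Sgrp_weights_of_common_signs[OF q r d(3) sq sr] by blast
  have "coprime P (q * r)"
    using P q r d by (simp add: primes_coprime)
  then obtain a where a: "\<And>i. a i \<in> Zmod (P * (q * r))" "\<And>i. [a i = uP i] (mod int P)"
    "\<And>i. [a i = b i] (mod int (q * r))" "[(\<Sum>i\<in>J. a i * z i) = 0] (mod int (P * (q * r)))"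
    using weights_chinese_remainder[OF _ _ _ uP(2) b(2)] P q r by (auto simp: prime_gt_0_nat)
  have "a i \<in> Lgrp (P * q * r) P" if "i \<in> J" for i
  proof -
    have "[a i = b i] (mod int q)" "[a i = b i] (mod int r)"
      using a(3)[of i] by (auto intro: cong_dvd_modulus)
    moreover have "\<not> int q dvd b i" "\<not> int r dvd b i" "Legendre (b i) (int q) = Legendre (b i) (int r)"
      using b(1)[OF that] Sgrp_two_primes_iff[OF q(1) r(1) d(3)] by auto
    ultimately show ?thesis
      unfolding Lgrp_three_primes_iff[OF P(1) q(1) r(1) d]
      using a(1)[of i] a(2)[of i] uP(1) that by (auto simp: ac_simps Legendre_cong cong_dvd_iff)
  qed
  then show ?thesis
    unfolding weighted_zero_sum_on_def using a(4) by (auto simp: ac_simps)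
qed

section \<open>The Davenport constant of a product of two primes\<close>

text \<open>In \<open>(1, q)\<close> every nonempty subsequence has a term that is the only unit at \<open>q\<close> or at
  \<open>r\<close>, which rules out a local zero sum there.\<close>
lemma zero_sum_free_one_prime:
  assumes q: "prime q" and r: "prime r" and "q \<noteq> r"
  shows "zero_sum_free_on (q * r) (units_mod (q * r)) (\<lambda>i. [1, int q] ! i) {..<2}"
  unfolding zero_sum_free_on_def
proof (intro allI impI notI)
  fix J
  assume J: "J \<subseteq> {..<2}" "J \<noteq> {}"
    and zs: "weighted_zero_sum_on (q * r) (units_mod (q * r)) (\<lambda>i. [1, int q] ! i) J"
  have "finite J" "J \<subseteq> {0, 1}"
    using J(1) finite_subset by auto
  show False
  proof (cases "0 \<in> J")
    case True
    have "\<not> legendre_zero_sum q (\<lambda>i. [1, int q] ! i) J e" for e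
      using q \<open>finite J\<close> True \<open>J \<subseteq> {0, 1}\<close>
      by (intro not_legendre_zero_sum_single) (auto simp: prime_gt_1_nat)
    then show False
      using legendre_zero_sum_of_weighted_zero_sum[OF zs order_refl q] by auto
  next
    case False
    then have "J = {1}"
      using \<open>J \<subseteq> {0, 1}\<close> J(2) by auto
    moreover have "\<not> int r dvd int q"
      using q r \<open>q \<noteq> r\<close> primes_dvd_imp_eq by auto
    ultimately have "\<not> legendre_zero_sum r (\<lambda>i. [1, int q] ! i) J e" for e
      using r by (intro not_legendre_zero_sum_single) auto
    then show False
      using legendre_zero_sum_of_weighted_zero_sum[OF zs order_refl r] by auto
  qed
qed

lemma has_wzs_subseq_length_3:
  assumes q: "prime q" "7 \<le> q" and r: "prime r" "7 \<le> r" and "q \<noteq> r"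
    and G: "Sgrp (q * r) \<subseteq> G" and "length xs = 3"
  shows "has_wzs_subseq (q * r) G xs"
proof -
  obtain J s where J: "J \<subseteq> {..<3}" "J \<noteq> {}"
    and s: "legendre_zero_sum q (\<lambda>i. xs ! i) J s" "legendre_zero_sum r (\<lambda>i. xs ! i) J s"
    using common_legendre_zero_sum_exists[OF q r, of "{..<3}" "\<lambda>i. xs ! i"] by auto
  have "weighted_zero_sum_on (q * r) (Sgrp (q * r)) (\<lambda>i. xs ! i) J"
    using q r \<open>q \<noteq> r\<close> s by (intro Sgrp_zero_sum_of_common_signs) auto
  then have "weighted_zero_sum_on (q * r) G (\<lambda>i. xs ! i) J"
    using G by (rule weighted_zero_sum_on_mono[rotated])
  moreover have "J \<subseteq> set [0..<3]"
    using J(1) by auto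
  ultimately have "has_wzs_subseq (q * r) G (map (\<lambda>i. xs ! i) [0..<3])"
    using J(2) by (subst has_wzs_subseq_map_iff) auto
  then show ?thesis
    using \<open>length xs = 3\<close> by (metis map_nth)
qed

lemma not_has_wzs_subseq_one_prime:
  assumes "prime q" "prime r" "q \<noteq> r" "G \<subseteq> units_mod (q * r)" "k \<le> 2"
  shows "\<not> has_wzs_subseq (q * r) G (map (\<lambda>i. [1, int q] ! i) [0..<k])"
proof -
  have "zero_sum_free_on (q * r) G (\<lambda>i. [1, int q] ! i) {..<k}"
    using zero_sum_free_one_prime[OF assms(1-3)] assms(4,5)
    by (auto intro: zero_sum_free_on_mono zero_sum_free_on_subset)
  then show ?thesis
    unfolding has_wzs_subseq_map_iff[OF distinct_upt] zero_sum_free_on_def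
    by (auto simp: atLeast0LessThan)
qed

lemma davenport_two_primes:
  assumes q: "prime q" "7 \<le> q" and r: "prime r" "7 \<le> r" and "q \<noteq> r"
    and G: "Sgrp (q * r) \<subseteq> G" "G \<subseteq> units_mod (q * r)"
  shows "davenport (q * r) G = 3"
  unfolding davenport_def
proof (rule Least_equality)
  show "\<forall>xs. length xs = 3 \<and> set xs \<subseteq> Zmod (q * r) \<longrightarrow> has_wzs_subseq (q * r) G xs"
    using has_wzs_subseq_length_3[OF q r \<open>q \<noteq> r\<close> G(1)] by blast
next
  fix k
  assume all: "\<forall>xs. length xs = k \<and> set xs \<subseteq> Zmod (q * r) \<longrightarrow> has_wzs_subseq (q * r) G xs"
  show "3 \<le> k"
  proof (rule ccontr)
    assume "\<not> 3 \<le> k"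
    then have "k \<le> 2"
      by simp
    have "1 < int q" "int q < int q * int r"
      using q r by (simp_all add: prime_gt_1_nat)
    moreover from this have "1 < int q * int r"
      by (rule less_trans)
    ultimately have "1 \<in> Zmod (q * r)" "int q \<in> Zmod (q * r)"
      unfolding Zmod_def by auto
    then have "[1, int q] ! i \<in> Zmod (q * r)" if "i < 2" for i
      using that by (auto simp: less_2_cases_iff)
    then have "set (map (\<lambda>i. [1, int q] ! i) [0..<k]) \<subseteq> Zmod (q * r)"
      using \<open>k \<le> 2\<close> by auto
    then show False
      using all not_has_wzs_subseq_one_prime[OF q(1) r(1) \<open>q \<noteq> r\<close> G(2) \<open>k \<le> 2\<close>] by simp
  qed
qed

lemma extremal_pair_two_primes:
  assumes a: "prime a" "7 \<le> a" and b: "prime b" "7 \<le> b" and "a \<noteq> b"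
    and G: "Sgrp (a * b) \<subseteq> G" "G \<subseteq> units_mod (a * b)" and "i \<noteq> j"
    and Z: "zero_sum_free_on (a * b) G (\<lambda>k. z k mod int (a * b)) {i, j}"
  shows "extremal (a * b) G (map (\<lambda>y. y mod int (a * b)) [z i, z j])"
proof -
  have "0 < a * b"
    using a b by (simp add: prime_gt_0_nat)
  moreover have "map (\<lambda>y. y mod int (a * b)) [z i, z j] = map (\<lambda>k. z k mod int (a * b)) [i, j]"
    by simp
  ultimately show ?thesis
    unfolding extremal_def davenport_two_primes[OF a b \<open>a \<noteq> b\<close> G]
    using \<open>i \<noteq> j\<close> Z has_wzs_subseq_map_iff[of "[i, j]" "a * b" G]
    by (auto simp: Zmod_def zero_sum_free_on_def)
qed

section \<open>Sequences of length three\<close>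

lemma lessThan_3_eq: "{..<3::nat} = {0, 1, 2}"
  by auto

lemma card_three_two_exceptions:
  assumes "i < 3" "j < 3" "i \<noteq> j" "\<not> Q i" "\<not> Q j"
  shows "card {t \<in> {..<3::nat}. Q t} \<le> 1" and "2 \<le> card {t \<in> {..<3::nat}. \<not> Q t}"
proof -
  have "card {i, j} \<le> card {t \<in> {..<3::nat}. \<not> Q t}"
    using assms by (intro card_mono) auto
  then show N: "2 \<le> card {t \<in> {..<3::nat}. \<not> Q t}"
    using \<open>i \<noteq> j\<close> by simp
  have "{t \<in> {..<3::nat}. Q t} = {..<3} - {t \<in> {..<3}. \<not> Q t}"
    by auto
  moreover have "card ({..<3::nat} - {t \<in> {..<3}. \<not> Q t}) = 3 - card {t \<in> {..<3::nat}. \<not> Q t}"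
    by (subst card_Diff_subset) auto
  ultimately show "card {t \<in> {..<3::nat}. Q t} \<le> 1"
    using N by simp
qed

lemma equiv_wrt_permute_list:
  assumes "set xs \<subseteq> Zmod n" "1 \<in> A" "1 \<in> units_mod n" and f: "f permutes {..<length xs}"
  shows "equiv_wrt n A xs (permute_list f xs)"
proof -
  have inv: "inv_into UNIV f permutes {..<length xs}"
    using f by (rule permutes_inv)
  moreover have "permute_list f xs ! inv_into UNIV f i = xs ! i" if "i < length xs" for i
    using f that permutes_in_image[OF inv]
    by (simp add: permute_list_nth permutes_inverses)
  ultimately show ?thesis
    unfolding equiv_wrt_def using assms
    by (intro conjI exI[of _ "\<lambda>_. 1"] exI[of _ 1] exI[of _ "inv_into UNIV f"]) auto
qed

lemma move_term_three:
  assumes "length xs = 3" "set xs \<subseteq> Zmod n" "1 \<in> A" "1 \<in> units_mod n"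
    and j: "{j, j1, j2} = {..<3}" "j \<noteq> j1" "j \<noteq> j2" "j1 \<noteq> j2" and "k < 3"
  obtains ys a b where "equiv_wrt n A xs ys" "ys ! j = xs ! k" "ys ! j1 = xs ! a" "ys ! j2 = xs ! b"
    "{a, b} = {..<3} - {k}" "a \<noteq> b"
proof -
  let ?g = "transpose j k"
  have g: "?g permutes {..<3}"
    using j \<open>k < 3\<close> by (intro permutes_swap_id) auto
  have "?g ` ({..<3} - {j}) = {..<3} - {k}"
    using g by (simp add: image_set_diff permutes_inj permutes_image)
  moreover have "{..<3} - {j} = {j1, j2}"
    using j by auto
  ultimately have "{?g j1, ?g j2} = {..<3} - {k}"
    by simp
  moreover have "?g j1 \<noteq> ?g j2"
    using j(4) permutes_inj[OF g] by (meson injD)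
  moreover have "j < 3" "j1 < 3" "j2 < 3"
    using j(1) by auto
  moreover have "permute_list ?g xs ! i = xs ! ?g i" if "i < 3" for i
    using g that assms(1) by (simp add: permute_list_nth)
  moreover have "equiv_wrt n A xs (permute_list ?g xs)"
    using equiv_wrt_permute_list[OF assms(2-4)] g assms(1) by simp
  ultimately show thesis
    using that[of "permute_list ?g xs" "?g j1" "?g j2"] by simp
qed

section \<open>Zero-sum-free triples for \<open>L(Pqr; P)\<close>\<close>

text \<open>\<open>P\<close> is the distinguished prime \<open>p'\<close> of \<open>L(n; p')\<close>.\<close>
locale three_primes =
  fixes P q r :: nat
  assumes P: "prime P" "7 \<le> P" and q: "prime q" "7 \<le> q" and r: "prime r" "7 \<le> r"
    and distinct: "P \<noteq> q" "P \<noteq> r" "q \<noteq> r"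
begin

lemma primes_gt_2: "2 < P" "2 < q" "2 < r"
  using P q r by simp_all

lemma three_primes_swap: "three_primes P r q"
  using P q r distinct by unfold_locales auto

lemma Lgrp_zero_sum:
  "legendre_zero_sum P z J e \<Longrightarrow> legendre_zero_sum q z J s \<Longrightarrow> legendre_zero_sum r z J s \<Longrightarrow>
    weighted_zero_sum_on (P * q * r) (Lgrp (P * q * r) P) z J"
  using P q r distinct by (intro Lgrp_zero_sum_of_signs) auto

lemma zero_sum_free_no_local_solutions:
  assumes "zero_sum_free_on (P * q * r) (Lgrp (P * q * r) P) z I" "J \<subseteq> I" "J \<noteq> {}"
    and "legendre_zero_sum P z J e" "legendre_zero_sum q z J s" "legendre_zero_sum r z J s"
  shows False
  using assms(1-3) Lgrp_zero_sum[OF assms(4-6)] unfolding zero_sum_free_on_def by blast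

lemma one_in_Lgrp: "1 \<in> Lgrp (P * q * r) P"
proof -
  have "1 < P * q * r"
    using P q r by (simp add: prime_gt_1_nat one_less_mult)
  then have "(1::int) \<in> Zmod (P * q * r)"
    unfolding Zmod_def by (metis atLeastLessThan_iff of_nat_1 of_nat_less_iff zero_le_one)
  moreover have "\<not> int p dvd 1" if "prime p" for p
    using that not_prime_1 by (metis One_nat_def int_dvd_int_iff nat_dvd_1_iff_1 of_nat_1)
  ultimately show ?thesis
    unfolding Lgrp_three_primes_iff[OF P(1) q(1) r(1) distinct]
    using P(1) q(1) r(1) Legendre_one by metis
qed

lemma one_in_units_mod: "1 \<in> units_mod (P * q * r)"
  using one_in_Lgrp unfolding Lgrp_def by blast

lemma other_two_primes:
  assumes "p \<in> {P, q, r}"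
  obtains a b where "prime a" "7 \<le> a" "prime b" "7 \<le> b" "{a, b, p} = {P, q, r}"
proof -
  consider "p = P" | "p = q" | "p = r"
    using assms by blast
  then show thesis
  proof cases
    case 1
    then show thesis
      using that[of q r] q r by (simp add: insert_commute)
  next
    case 2
    then show thesis
      using that[of P r] P r by (simp add: insert_commute)
  next
    case 3
    then show thesis
      using that[of P q] P q by (simp add: insert_commute)
  qed
qed

lemma zero_sum_free_not_dvd_all:
  assumes Z: "zero_sum_free_on (P * q * r) (Lgrp (P * q * r) P) z I" and I: "finite I" "card I = 3"
    and p: "p \<in> {P, q, r}"
  shows "\<exists>i\<in>I. \<not> int p dvd z i"
proof (rule ccontr)
  assume "\<not> ?thesis"
  then have dvd: "\<And>i. i \<in> I \<Longrightarrow> int p dvd z i"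
    by blast
  obtain a b where ab: "prime a" "7 \<le> a" "prime b" "7 \<le> b" "{a, b, p} = {P, q, r}"
    using other_two_primes[OF p] by blast
  have "prime p" "2 < p"
    using p P q r by auto
  then have "\<exists>J\<subseteq>I. J \<noteq> {} \<and> (\<exists>s. \<forall>p'\<in>{a, b, p}. legendre_zero_sum p' z J s)"
    by (rule common_legendre_zero_sum_if_dvd_all[OF ab(1-4) _ _ I dvd])
  then obtain J s where J: "J \<subseteq> I" "J \<noteq> {}" and s: "\<forall>p'\<in>{P, q, r}. legendre_zero_sum p' z J s"
    unfolding ab(5) by blast
  show False
    by (rule zero_sum_free_no_local_solutions[OF Z J]) (use s in auto)
qed

lemma zero_sum_free_structure:
  assumes Z: "zero_sum_free_on (P * q * r) (Lgrp (P * q * r) P) z {..<3}"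
  shows "(\<exists>k<3. int q dvd z k \<and> int r dvd z k) \<or>
    (\<exists>p\<in>{P, q, r}. \<exists>i<3. \<not> int p dvd z i \<and> (\<forall>j<3. j \<noteq> i \<longrightarrow> int p dvd z j))"
proof (rule ccontr)
  assume "\<not> ?thesis"
  then have disj: "\<And>k. k \<in> {..<3} \<Longrightarrow> \<not> (int q dvd z k \<and> int r dvd z k)"
    and single: "\<And>p i. p \<in> {P, q, r} \<Longrightarrow> i < 3 \<Longrightarrow> \<not> int p dvd z i \<Longrightarrow>
      \<exists>j<3. j \<noteq> i \<and> \<not> int p dvd z j"
    by auto
  have card: "card {i \<in> {..<3}. int p dvd z i} \<le> 1 \<and> 2 \<le> card {i \<in> {..<3}. \<not> int p dvd z i}"
    if p: "p \<in> {P, q, r}" for p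
  proof -
    obtain i where i: "i < 3" "\<not> int p dvd z i"
      using zero_sum_free_not_dvd_all[OF Z _ _ p] by auto
    then obtain j where "j < 3" "j \<noteq> i" "\<not> int p dvd z j"
      using single[OF p] by blast
    then show ?thesis
      using card_three_two_exceptions[of i j "\<lambda>t. int p dvd z t"] i by simp
  qed
  note N = card[THEN conjunct2] and D = card[THEN conjunct1]
  have "card {i \<in> {..<3::nat}. \<not> int P dvd z i} \<noteq> 1"
    using N[of P] by simp
  moreover have "card {i \<in> {..<3::nat}. \<not> int P dvd z i} \<le> 3"
    using card_mono[of "{..<3::nat}" "{i \<in> {..<3}. \<not> int P dvd z i}"] by auto
  ultimately have "\<exists>e. legendre_zero_sum P z {..<3} e"
    by (rule legendre_zero_sum_exists[OF P finite_lessThan])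
  then obtain e where e: "legendre_zero_sum P z {..<3} e"
    by blast
  have "\<exists>s. legendre_zero_sum q z {..<3} s \<and> legendre_zero_sum r z {..<3} s"
    using D disj by (intro common_legendre_zero_sum_at_most_one_dvd[OF q r finite_lessThan]) simp_all
  then obtain s where s: "legendre_zero_sum q z {..<3} s" "legendre_zero_sum r z {..<3} s"
    by blast
  have "(0::nat) \<in> {..<3}"
    by simp
  then have "{..<3::nat} \<noteq> {}"
    by blast
  then show False
    by (rule zero_sum_free_no_local_solutions[OF Z order_refl _ e s])
qed

lemma zero_sum_free_not_dvd:
  assumes "zero_sum_free_on (P * q * r) (Lgrp (P * q * r) P) z I" "k \<in> I"
  shows "\<not> int (P * q * r) dvd z k"
proof
  assume "int (P * q * r) dvd z k"
  then have "weighted_zero_sum_on (P * q * r) (Lgrp (P * q * r) P) z {k}"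
    using one_in_Lgrp by (rule weighted_zero_sum_on_singleton[rotated])
  then show False
    using assms unfolding zero_sum_free_on_def by blast
qed

lemma zero_sum_free_not_dvd_P:
  assumes "zero_sum_free_on (P * q * r) (Lgrp (P * q * r) P) z I" "k \<in> I"
    and "int q dvd z k" "int r dvd z k"
  shows "\<not> int P dvd z k"
proof
  assume "int P dvd z k"
  moreover have "int (q * r) dvd z k"
    using assms(3,4) q r distinct by (simp add: divides_mult primes_coprime)
  ultimately have "int P * int (q * r) dvd z k"
    using P q r distinct by (intro divides_mult) (simp_all add: primes_coprime)
  then show False
    using zero_sum_free_not_dvd[OF assms(1,2)] by (simp add: ac_simps)
qed

lemma zero_sum_free_reduce_qr:
  assumes Z: "zero_sum_free_on (P * q * r) (Lgrp (P * q * r) P) z {..<3}"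
    and k: "k < 3" "int q dvd z k" "int r dvd z k"
  shows "zero_sum_free_on (q * r) (Sgrp (q * r)) (\<lambda>i. z i mod int (q * r)) ({..<3} - {k})"
  unfolding zero_sum_free_on_def
proof (intro allI impI notI)
  fix J
  assume J: "J \<subseteq> {..<3} - {k}" "J \<noteq> {}"
    and zs: "weighted_zero_sum_on (q * r) (Sgrp (q * r)) (\<lambda>i. z i mod int (q * r)) J"
  obtain s where "legendre_zero_sum q (\<lambda>i. z i mod int (q * r)) J s"
    "legendre_zero_sum r (\<lambda>i. z i mod int (q * r)) J s"
    using common_legendre_zero_sum_of_Sgrp[OF q(1) r(1) distinct(3) zs] by blast
  then have s: "legendre_zero_sum q z J s" "legendre_zero_sum r z J s"
    by (simp_all add: legendre_zero_sum_mod)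
  have "\<not> int P dvd z k"
    using zero_sum_free_not_dvd_P[OF Z] k by simp
  have fin: "finite J" "k \<notin> J"
    using J(1) finite_subset by auto
  let ?N = "\<lambda>J. {i \<in> J. \<not> int P dvd z i}"
  have N3: "card (?N J') \<le> 3" if "J' \<subseteq> {..<3}" for J'
    using that card_mono[of "{..<3::nat}" "?N J'"] by auto
  show False
  proof (cases "card (?N J) = 1")
    case False
    then have "\<exists>e. legendre_zero_sum P z J e"
      using N3 J(1) by (intro legendre_zero_sum_exists[OF P fin(1)]) auto
    then show False
      using zero_sum_free_no_local_solutions[OF Z _ J(2) _ s] J(1) by blast
  next
    case True
    text \<open>Adding the term \<open>z\<^sub>k\<close>, a unit at \<open>P\<close> and zero at \<open>q\<close> and \<open>r\<close>, makes \<open>P\<close>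
      solvable.\<close>
    have "?N (insert k J) = insert k (?N J)"
      using \<open>\<not> int P dvd z k\<close> by auto
    then have "card (?N (insert k J)) = 2"
      using True fin by simp
    moreover have "insert k J \<subseteq> {..<3}"
      using J(1) k(1) by auto
    ultimately have "\<exists>e. legendre_zero_sum P z (insert k J) e"
      using N3 by (intro legendre_zero_sum_exists[OF P]) (auto simp: fin)
    moreover have "legendre_zero_sum q z (insert k J) (s(k := 1))"
      "legendre_zero_sum r z (insert k J) (s(k := 1))"
      using s k fin primes_gt_2 by (auto intro!: legendre_zero_sum_insert_dvd q(1) r(1))
    ultimately show False
      using zero_sum_free_no_local_solutions[OF Z \<open>insert k J \<subseteq> {..<3}\<close>] by blast
  qed
qed

lemma zero_sum_free_reduce_P:
  assumes Z: "zero_sum_free_on (P * q * r) (Lgrp (P * q * r) P) z {..<3}"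
    and dvd: "\<And>j. j < 3 \<Longrightarrow> j \<noteq> i \<Longrightarrow> int P dvd z j"
  shows "zero_sum_free_on (q * r) (Sgrp (q * r)) (\<lambda>j. z j mod int (q * r)) ({..<3} - {i})"
  unfolding zero_sum_free_on_def
proof (intro allI impI notI)
  fix J
  assume J: "J \<subseteq> {..<3} - {i}" "J \<noteq> {}"
    and zs: "weighted_zero_sum_on (q * r) (Sgrp (q * r)) (\<lambda>j. z j mod int (q * r)) J"
  obtain s where "legendre_zero_sum q (\<lambda>j. z j mod int (q * r)) J s"
    "legendre_zero_sum r (\<lambda>j. z j mod int (q * r)) J s"
    using common_legendre_zero_sum_of_Sgrp[OF q(1) r(1) distinct(3) zs] by blast
  then have s: "legendre_zero_sum q z J s" "legendre_zero_sum r z J s"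
    by (simp_all add: legendre_zero_sum_mod)
  have "legendre_zero_sum P z J s"
    using J dvd legendre_zero_sum_signs[OF s(1)]
    by (intro legendre_zero_sum_all_dvd[OF P(1) primes_gt_2(1)]) (auto intro: finite_subset)
  then show False
    using zero_sum_free_no_local_solutions[OF Z _ J(2) _ s] J(1) by blast
qed

lemma zero_sum_free_reduce_q:
  assumes Z: "zero_sum_free_on (P * q * r) (Lgrp (P * q * r) P) z {..<3}"
    and dvd: "\<And>j. j < 3 \<Longrightarrow> j \<noteq> i \<Longrightarrow> int q dvd z j"
  shows "zero_sum_free_on (P * r) (units_mod (P * r)) (\<lambda>j. z j mod int (P * r)) ({..<3} - {i})"
  unfolding zero_sum_free_on_def
proof (intro allI impI notI)
  fix J
  assume J: "J \<subseteq> {..<3} - {i}" "J \<noteq> {}"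
    and zs: "weighted_zero_sum_on (P * r) (units_mod (P * r)) (\<lambda>j. z j mod int (P * r)) J"
  obtain e where "legendre_zero_sum P (\<lambda>j. z j mod int (P * r)) J e"
    using legendre_zero_sum_of_weighted_zero_sum[OF zs order_refl P(1)] by auto
  then have e: "legendre_zero_sum P z J e"
    by (simp add: legendre_zero_sum_mod)
  obtain s where "legendre_zero_sum r (\<lambda>j. z j mod int (P * r)) J s"
    using legendre_zero_sum_of_weighted_zero_sum[OF zs order_refl r(1)] by auto
  then have sr: "legendre_zero_sum r z J s"
    by (simp add: legendre_zero_sum_mod)
  have "legendre_zero_sum q z J s"
    using J dvd legendre_zero_sum_signs[OF sr]
    by (intro legendre_zero_sum_all_dvd[OF q(1) primes_gt_2(2)]) (auto intro: finite_subset)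
  then show False
    using zero_sum_free_no_local_solutions[OF Z _ J(2) e _ sr] J(1) by blast
qed

lemma cofactor_two_primes:
  assumes "p \<in> {P, q, r}"
  shows "\<exists>a b. P * q * r div p = a * b \<and> prime a \<and> 7 \<le> a \<and> prime b \<and> 7 \<le> b \<and> a \<noteq> b"
proof -
  have "0 < P" "0 < q" "0 < r"
    using P q r by (simp_all add: prime_gt_0_nat)
  then have div: "P * q * r div P = q * r" "P * q * r div q = P * r" "P * q * r div r = P * q"
    by simp_all
  consider "p = P" | "p = q" | "p = r"
    using assms by blast
  then show ?thesis
  proof cases
    case 1
    then show ?thesis
      using div q r distinct by (intro exI[of _ q] exI[of _ r]) simp
  next
    case 2
    then show ?thesis
      using div P r distinct by (intro exI[of _ P] exI[of _ r]) simp
  next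
    case 3
    then show ?thesis
      using div P q distinct by (intro exI[of _ P] exI[of _ q]) simp
  qed
qed

lemma reduced_zero_sum_free:
  assumes Z: "zero_sum_free_on (P * q * r) (Lgrp (P * q * r) P) z {..<3}" and p: "p \<in> {P, q, r}"
    and dvd: "\<And>j. j < 3 \<Longrightarrow> j \<noteq> i \<Longrightarrow> int p dvd z j"
  defines "m \<equiv> P * q * r div p"
  shows "zero_sum_free_on m (Sgrp m) (\<lambda>j. z j mod int m) ({..<3} - {i})"
    and "p \<noteq> P \<Longrightarrow> zero_sum_free_on m (units_mod m) (\<lambda>j. z j mod int m) ({..<3} - {i})"
proof -
  have pos: "0 < P" "0 < q" "0 < r"
    using P q r by (simp_all add: prime_gt_0_nat)
  have units: "zero_sum_free_on m (units_mod m) (\<lambda>j. z j mod int m) ({..<3} - {i})"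
    if nP: "p \<noteq> P"
  proof -
    consider "p = q" | "p = r"
      using p nP by blast
    then show ?thesis
    proof cases
      case 1
      then show ?thesis
        using zero_sum_free_reduce_q[OF Z] dvd pos by (simp add: m_def)
    next
      case 2
      interpret swapped: three_primes P r q
        by (rule three_primes_swap)
      have "zero_sum_free_on (P * r * q) (Lgrp (P * r * q) P) z {..<3}"
        using Z by (simp add: ac_simps)
      then show ?thesis
        using swapped.zero_sum_free_reduce_q dvd pos 2 by (simp add: m_def ac_simps)
    qed
  qed
  then show "p \<noteq> P \<Longrightarrow> zero_sum_free_on m (units_mod m) (\<lambda>j. z j mod int m) ({..<3} - {i})" .
  show "zero_sum_free_on m (Sgrp m) (\<lambda>j. z j mod int m) ({..<3} - {i})"
  proof (cases "p = P")
    case True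
    then show ?thesis
      using zero_sum_free_reduce_P[OF Z] dvd pos by (simp add: m_def)
  next
    case False
    then show ?thesis
      using units zero_sum_free_on_mono[OF Sgrp_subset_units_mod] by blast
  qed
qed

lemma equiv_extremal_term_dvd_qr:
  assumes xs: "length xs = 3" "set xs \<subseteq> Zmod (P * q * r)"
    and Z: "zero_sum_free_on (P * q * r) (Lgrp (P * q * r) P) (\<lambda>i. xs ! i) {..<3}"
    and k: "k < 3" "int q dvd xs ! k" "int r dvd xs ! k"
  shows "\<exists>ys. equiv_wrt (P * q * r) (Lgrp (P * q * r) P) xs ys \<and> ys ! 2 \<noteq> 0 \<and>
    int (q * r) dvd ys ! 2 \<and>
    extremal (q * r) (Sgrp (q * r)) (map (\<lambda>y. y mod int (q * r)) [ys ! 0, ys ! 1])"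
proof -
  obtain ys a b where ys: "equiv_wrt (P * q * r) (Lgrp (P * q * r) P) xs ys" "ys ! 2 = xs ! k"
    "ys ! 0 = xs ! a" "ys ! 1 = xs ! b" "{a, b} = {..<3} - {k}" "a \<noteq> b"
    using move_term_three[OF xs one_in_Lgrp one_in_units_mod, of 2 0 1 k] k(1) lessThan_3_eq by auto
  note reduced = zero_sum_free_reduce_qr[OF Z k]
  have "ys ! 2 \<noteq> 0"
    using zero_sum_free_not_dvd[OF Z, of k] k(1) ys(2) by (metis dvd_0_right lessThan_iff)
  moreover have "int (q * r) dvd ys ! 2"
    using k(2,3) ys(2) q r distinct by (simp add: divides_mult primes_coprime)
  moreover have "extremal (q * r) (Sgrp (q * r)) (map (\<lambda>y. y mod int (q * r)) [xs ! a, xs ! b])"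
    using reduced ys(5,6) q r distinct Sgrp_subset_units_mod
    by (intro extremal_pair_two_primes) auto
  ultimately show ?thesis
    using ys(1,3,4) by auto
qed

lemma equiv_extremal_prime_dvd_two:
  assumes xs: "length xs = 3" "set xs \<subseteq> Zmod (P * q * r)"
    and Z: "zero_sum_free_on (P * q * r) (Lgrp (P * q * r) P) (\<lambda>i. xs ! i) {..<3}"
    and p: "p \<in> {P, q, r}" and i: "i < 3" "\<not> int p dvd xs ! i"
    and dvd: "\<And>j. j < 3 \<Longrightarrow> j \<noteq> i \<Longrightarrow> int p dvd xs ! j"
  defines "m \<equiv> P * q * r div p"
  shows "\<exists>ys. equiv_wrt (P * q * r) (Lgrp (P * q * r) P) xs ys \<and>
    \<not> int p dvd ys ! 0 \<and> int p dvd ys ! 1 \<and> int p dvd ys ! 2 \<and>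
    extremal m (Sgrp m) (map (\<lambda>y. y mod int m) [ys ! 1, ys ! 2]) \<and>
    (p \<noteq> P \<longrightarrow> extremal m (units_mod m) (map (\<lambda>y. y mod int m) [ys ! 1, ys ! 2]))"
proof -
  obtain ys a b where ys: "equiv_wrt (P * q * r) (Lgrp (P * q * r) P) xs ys" "ys ! 0 = xs ! i"
    "ys ! 1 = xs ! a" "ys ! 2 = xs ! b" "{a, b} = {..<3} - {i}" "a \<noteq> b"
    using move_term_three[OF xs one_in_Lgrp one_in_units_mod, of 0 1 2 i] i(1) lessThan_3_eq by auto
  obtain c d where cd: "m = c * d" "prime c" "7 \<le> c" "prime d" "7 \<le> d" "c \<noteq> d"
    using cofactor_two_primes[OF p] unfolding m_def by blast
  have reduced: "zero_sum_free_on m (Sgrp m) (\<lambda>j. xs ! j mod int m) {a, b}"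
    "p \<noteq> P \<Longrightarrow> zero_sum_free_on m (units_mod m) (\<lambda>j. xs ! j mod int m) {a, b}"
    using reduced_zero_sum_free[OF Z p, of i] dvd unfolding ys(5) by (simp_all add: m_def)
  have "extremal m (Sgrp m) (map (\<lambda>y. y mod int m) [xs ! a, xs ! b])"
    using reduced(1) cd ys(6) Sgrp_subset_units_mod
    by (simp only: cd(1)) (intro extremal_pair_two_primes; simp)
  moreover have "extremal m (units_mod m) (map (\<lambda>y. y mod int m) [xs ! a, xs ! b])" if "p \<noteq> P"
    using reduced(2)[OF that] cd ys(6) Sgrp_subset_units_mod
    by (simp only: cd(1)) (intro extremal_pair_two_primes; simp)
  moreover have "int p dvd xs ! a" "int p dvd xs ! b"
    using dvd ys(5) by auto
  ultimately show ?thesis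
    using ys(1-4) i(2) by auto
qed

end

lemma squarefree_three_prime_factors:
  fixes n p :: nat
  assumes sf: "squarefree n" and size: "size (prime_factorization n) = 3" and p: "p \<in> prime_factors n"
  obtains q r where "prime_factors n = {p, q, r}" "n = p * q * r" "p \<noteq> q" "p \<noteq> r" "q \<noteq> r"
proof -
  define S where "S = prime_factors n"
  have "n \<noteq> 0"
    using sf by (metis not_squarefree_0)
  then have mult: "multiplicity x n = 1" if "x \<in> S" for x
    using sf that squarefree_factorial_semiring' unfolding S_def by blast
  have pf: "prime_factorization n = mset_set S"
  proof (rule multiset_eqI)
    fix x
    show "count (prime_factorization n) x = count (mset_set S) x"
      using mult in_prime_factors_imp_prime[of x n] unfolding S_def
      by (cases "x \<in> prime_factors n") (auto simp: count_prime_factorization_prime not_in_iff)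
  qed
  then have "card S = 3"
    using size by simp
  then have "card (S - {p}) = 2"
    using p by (simp add: S_def)
  then obtain q r where qr: "S - {p} = {q, r}" "q \<noteq> r"
    unfolding card_2_iff by blast
  then have S: "S = {p, q, r}" and "p \<noteq> q" "p \<noteq> r"
    using p unfolding S_def by auto
  have "n = prod_mset (prime_factorization n)"
    using \<open>n \<noteq> 0\<close> by simp
  also have "\<dots> = p * q * r"
    unfolding pf S using \<open>p \<noteq> q\<close> \<open>p \<noteq> r\<close> qr(2) by simp
  finally show thesis
    using that S \<open>p \<noteq> q\<close> \<open>p \<noteq> r\<close> qr(2) unfolding S_def by blast
qed

theorem theorem5p3:
  fixes n p' :: nat and xs :: "int list"
  assumes "odd n" and "squarefree n" and "size (prime_factorization n) = 3"
    and "\<forall>p\<in>prime_factors n. p \<ge> 7"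
    and "p' \<in> prime_factors n"
    and "length xs = 3"
    and "extremal n (Lgrp n p') xs"
  shows "(\<exists>ys. equiv_wrt n (Lgrp n p') xs ys \<and>
            ys ! 2 \<noteq> 0 \<and> int (n div p') dvd ys ! 2 \<and>
            extremal (n div p') (Sgrp (n div p'))
              (map (\<lambda>y. y mod int (n div p')) [ys ! 0, ys ! 1]))
       \<or> (\<exists>ys p. equiv_wrt n (Lgrp n p') xs ys \<and> p \<in> prime_factors n \<and>
            \<not> int p dvd ys ! 0 \<and> int p dvd ys ! 1 \<and> int p dvd ys ! 2 \<and>
            extremal (n div p) (Sgrp (n div p))
              (map (\<lambda>y. y mod int (n div p)) [ys ! 1, ys ! 2]) \<and>
            (p \<noteq> p' \<longrightarrow> extremal (n div p) (units_mod (n div p))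
              (map (\<lambda>y. y mod int (n div p)) [ys ! 1, ys ! 2])))"
proof -
  obtain q r where pf: "prime_factors n = {p', q, r}" and n: "n = p' * q * r"
    and distinct: "p' \<noteq> q" "p' \<noteq> r" "q \<noteq> r"
    using squarefree_three_prime_factors[OF assms(2,3,5)] by blast
  interpret three_primes p' q r
    using pf assms(4) distinct by unfold_locales auto
  have xs: "set xs \<subseteq> Zmod (p' * q * r)"
    and Z: "zero_sum_free_on (p' * q * r) (Lgrp (p' * q * r) p') (\<lambda>i. xs ! i) {..<3}"
    using assms(7) unfolding n extremal_def not_has_wzs_subseq_iff assms(6) by blast+
  have "n div p' = q * r"
    using n P by (simp add: prime_gt_0_nat)
  from zero_sum_free_structure[OF Z] show ?thesis
  proof (elim disjE bexE exE conjE)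
    fix k
    assume "k < 3" "int q dvd xs ! k" "int r dvd xs ! k"
    then show ?thesis
      using equiv_extremal_term_dvd_qr[OF assms(6) xs Z] \<open>n div p' = q * r\<close> n by auto
  next
    fix p i
    assume "p \<in> {p', q, r}" "i < 3" "\<not> int p dvd xs ! i" "\<forall>j<3. j \<noteq> i \<longrightarrow> int p dvd xs ! j"
    then show ?thesis
      using equiv_extremal_prime_dvd_two[OF assms(6) xs Z, of p i] pf n by auto
  qed
qed

end
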